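(* Let $H$ be a finite-dimensional Hopf algebra over a field $k$, $R\subseteq H$ a Hopf subalgebra, and let $I$ be the maximal Hopf ideal of $H$ contained in $R^+H$. If $K$ is the maximal normal Hopf subalgebra of $H$ contained in $R$, then $HK^+\subseteq I$. Conversely, if $I=HK^+$ for some Hopf subalgebra $K$ with $K\subseteq R\subseteq H$, then $K$ is normal in $H$.
   Context: For a Hopf subalgebra $C$, $C^+=\ker\varepsilon\cap C$. A Hopf ideal is a two-sided ideal $J$ which is a coideal ($\Delta(J)\subseteq J\otimes H+H\otimes J$, $\varepsilon(J)=0$) and stable under the antipode. A Hopf subalgebra $K$ of the finite-dimensional Hopf algebra $H$ is normal if $HK^+=K^+H$. *)

theory Defs
  imports Complex_Main
begin

text \<open>
  A finite-dimensional Hopf algebra over a field 'k is modelled on a type 'h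
  (the whole of H is UNIV :: 'h set).  The ring structure of 'h (class ring_1)
  is the multiplication and unit of H; scale is the k-vector space structure.
  Elements of the tensor powers of H are represented by finite formal sums
  (lists of pairs / triples), and two such formal sums are identified iff
  they agree under pairing with all k-linear functionals on H; this is the
  standard (injective) embedding of H (x) H into Bil(H*, H*), so this realizes
  the tensor product H (x) H (resp. H (x) H (x) H) faithfully.
\<close>

definition lfun :: "('k::field \<Rightarrow> 'h::ring_1 \<Rightarrow> 'h) \<Rightarrow> ('h \<Rightarrow> 'k) \<Rightarrow> bool" where
  "lfun scale f \<longleftrightarrow> Vector_Spaces.linear scale (*) f"

definition tpair :: "('h \<Rightarrow> 'k::field) \<Rightarrow> ('h \<Rightarrow> 'k) \<Rightarrow> ('h \<times> 'h) list \<Rightarrow> 'k" where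
  "tpair f g xs = (\<Sum>(a, b) \<leftarrow> xs. f a * g b)"

definition tpair3 :: "('h \<Rightarrow> 'k::field) \<Rightarrow> ('h \<Rightarrow> 'k) \<Rightarrow> ('h \<Rightarrow> 'k)
    \<Rightarrow> ('h \<times> 'h \<times> 'h) list \<Rightarrow> 'k" where
  "tpair3 f g h xs = (\<Sum>(a, b, c) \<leftarrow> xs. f a * g b * h c)"

definition teq :: "('k::field \<Rightarrow> 'h::ring_1 \<Rightarrow> 'h) \<Rightarrow> ('h \<times> 'h) list \<Rightarrow> ('h \<times> 'h) list \<Rightarrow> bool" where
  "teq scale xs ys \<longleftrightarrow> (\<forall>f g. lfun scale f \<and> lfun scale g \<longrightarrow> tpair f g xs = tpair f g ys)"

definition teq3 :: "('k::field \<Rightarrow> 'h::ring_1 \<Rightarrow> 'h) \<Rightarrow> ('h \<times> 'h \<times> 'h) list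
    \<Rightarrow> ('h \<times> 'h \<times> 'h) list \<Rightarrow> bool" where
  "teq3 scale xs ys \<longleftrightarrow> (\<forall>f g h. lfun scale f \<and> lfun scale g \<and> lfun scale h
      \<longrightarrow> tpair3 f g h xs = tpair3 f g h ys)"

definition hopf_algebra ::
  "('k::field \<Rightarrow> 'h::ring_1 \<Rightarrow> 'h) \<Rightarrow> ('h \<Rightarrow> ('h \<times> 'h) list) \<Rightarrow> ('h \<Rightarrow> 'k) \<Rightarrow> ('h \<Rightarrow> 'h) \<Rightarrow> bool"
where
  "hopf_algebra scale \<Delta> \<epsilon> S \<longleftrightarrow>
     \<comment> \<open>finite-dimensional k-algebra\<close>
     vector_space scale \<and>
     (\<exists>B. finite B \<and> module.span scale B = UNIV) \<and>
     (\<forall>c x y. scale c (x * y) = scale c x * y \<and> scale c (x * y) = x * scale c y) \<and>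
     \<comment> \<open>coalgebra\<close>
     (\<forall>x y. teq scale (\<Delta> (x + y)) (\<Delta> x @ \<Delta> y)) \<and>
     (\<forall>c x. teq scale (\<Delta> (scale c x)) (map (\<lambda>(a, b). (scale c a, b)) (\<Delta> x))) \<and>
     lfun scale \<epsilon> \<and>
     (\<forall>x. teq3 scale
            (concat (map (\<lambda>(a, b). map (\<lambda>(p, q). (p, q, b)) (\<Delta> a)) (\<Delta> x)))
            (concat (map (\<lambda>(a, b). map (\<lambda>(p, q). (a, p, q)) (\<Delta> b)) (\<Delta> x)))) \<and>
     (\<forall>x. (\<Sum>(a, b) \<leftarrow> \<Delta> x. scale (\<epsilon> a) b) = x) \<and>
     (\<forall>x. (\<Sum>(a, b) \<leftarrow> \<Delta> x. scale (\<epsilon> b) a) = x) \<and>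
     \<comment> \<open>bialgebra: \<Delta> and \<epsilon> are algebra maps\<close>
     (\<forall>x y. teq scale (\<Delta> (x * y))
              (concat (map (\<lambda>(a, b). map (\<lambda>(a', b'). (a * a', b * b')) (\<Delta> y)) (\<Delta> x)))) \<and>
     teq scale (\<Delta> 1) [(1, 1)] \<and>
     (\<forall>x y. \<epsilon> (x * y) = \<epsilon> x * \<epsilon> y) \<and> \<epsilon> 1 = 1 \<and>
     \<comment> \<open>antipode\<close>
     Vector_Spaces.linear scale scale S \<and>
     (\<forall>x. (\<Sum>(a, b) \<leftarrow> \<Delta> x. S a * b) = scale (\<epsilon> x) 1) \<and>
     (\<forall>x. (\<Sum>(a, b) \<leftarrow> \<Delta> x. a * S b) = scale (\<epsilon> x) 1)"

definition setprod :: "('k::field \<Rightarrow> 'h::ring_1 \<Rightarrow> 'h) \<Rightarrow> 'h set \<Rightarrow> 'h set \<Rightarrow> 'h set" where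
  "setprod scale A B = module.span scale {a * b | a b. a \<in> A \<and> b \<in> B}"

definition plus_part :: "('h \<Rightarrow> 'k::field) \<Rightarrow> 'h set \<Rightarrow> 'h set" where
  "plus_part \<epsilon> C = {c \<in> C. \<epsilon> c = 0}"

definition hopf_subalgebra ::
  "('k::field \<Rightarrow> 'h::ring_1 \<Rightarrow> 'h) \<Rightarrow> ('h \<Rightarrow> ('h \<times> 'h) list) \<Rightarrow> ('h \<Rightarrow> 'h) \<Rightarrow> 'h set \<Rightarrow> bool"
where
  "hopf_subalgebra scale \<Delta> S C \<longleftrightarrow>
     module.subspace scale C \<and> 1 \<in> C \<and> (\<forall>x\<in>C. \<forall>y\<in>C. x * y \<in> C) \<and>
     (\<forall>x\<in>C. \<exists>ys. set ys \<subseteq> C \<times> C \<and> teq scale (\<Delta> x) ys) \<and>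
     S ` C \<subseteq> C"

definition hopf_ideal ::
  "('k::field \<Rightarrow> 'h::ring_1 \<Rightarrow> 'h) \<Rightarrow> ('h \<Rightarrow> ('h \<times> 'h) list) \<Rightarrow> ('h \<Rightarrow> 'k) \<Rightarrow> ('h \<Rightarrow> 'h)
     \<Rightarrow> 'h set \<Rightarrow> bool"
where
  "hopf_ideal scale \<Delta> \<epsilon> S J \<longleftrightarrow>
     module.subspace scale J \<and> (\<forall>h x. x \<in> J \<longrightarrow> h * x \<in> J \<and> x * h \<in> J) \<and>
     (\<forall>x\<in>J. \<exists>ys. (\<forall>(a, b) \<in> set ys. a \<in> J \<or> b \<in> J) \<and> teq scale (\<Delta> x) ys) \<and>
     (\<forall>x\<in>J. \<epsilon> x = 0) \<and>
     S ` J \<subseteq> J"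

definition normal_hopf_subalgebra ::
  "('k::field \<Rightarrow> 'h::ring_1 \<Rightarrow> 'h) \<Rightarrow> ('h \<Rightarrow> ('h \<times> 'h) list) \<Rightarrow> ('h \<Rightarrow> 'k) \<Rightarrow> ('h \<Rightarrow> 'h)
     \<Rightarrow> 'h set \<Rightarrow> bool"
where
  "normal_hopf_subalgebra scale \<Delta> \<epsilon> S K \<longleftrightarrow>
     hopf_subalgebra scale \<Delta> S K \<and>
     setprod scale UNIV (plus_part \<epsilon> K) = setprod scale (plus_part \<epsilon> K) UNIV"

end

theory Submission
  imports Defs
begin

text \<open>
  If \<open>K\<close> is normal, \<open>HK\<^sup>+ = K\<^sup>+H\<close> is a Hopf ideal (the coideal property
  follows from \<open>\<Delta>(hk) = h\<^sub>1(k\<^sub>1 - \<epsilon>(k\<^sub>1)) \<otimes> h\<^sub>2k\<^sub>2 + h\<^sub>1 \<otimes> h\<^sub>2k\<close>), and it lies in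
  \<open>R\<^sup>+H\<close>, hence in the maximal such ideal \<open>I\<close>.
  Conversely, if \<open>HK\<^sup>+\<close> is a Hopf ideal, it is a right ideal, so \<open>K\<^sup>+H \<subseteq> HK\<^sup>+\<close>, while the
  antimultiplicative antipode maps \<open>HK\<^sup>+\<close> into \<open>K\<^sup>+H\<close>. The antipode of a finite-dimensional
  Hopf algebra is injective, because a nonzero integral \<open>\<lambda>\<close> recovers \<open>h\<close> from the functional
  \<open>w \<mapsto> \<lambda>(w S(h))\<close>; so the dimensions agree and \<open>HK\<^sup>+ = K\<^sup>+H\<close>.
  A nonzero integral exists since every functional is a combination of integrals of the
  form \<open>x \<mapsto> tr(c \<mapsto> x S\<^sup>2(c\<^sub>1) m(c\<^sub>2))\<close>.

  Tensors are only available as formal sums identified by pairing with functionals, so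
  \<open>\<Delta> x\<close> is used through the Sweedler sum \<open>sweedler x B = \<Sum> B x\<^sub>1 x\<^sub>2\<close>, computed in
  coordinates with respect to a fixed basis; for bilinear \<open>B\<close> it agrees with the sum over
  any representative of \<open>\<Delta> x\<close>.
\<close>

lemma sum_swap3:
  "(\<Sum>i\<in>A. \<Sum>j\<in>B. \<Sum>k\<in>C. f i j k) = (\<Sum>k\<in>C. \<Sum>i\<in>A. \<Sum>j\<in>B. f i j k)"
proof -
  have "(\<Sum>i\<in>A. \<Sum>j\<in>B. \<Sum>k\<in>C. f i j k) = (\<Sum>i\<in>A. \<Sum>k\<in>C. \<Sum>j\<in>B. f i j k)"
    by (rule sum.cong[OF refl], rule sum.swap)
  also have "\<dots> = (\<Sum>k\<in>C. \<Sum>i\<in>A. \<Sum>j\<in>B. f i j k)" by (rule sum.swap)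
  finally show ?thesis .
qed

lemma sum_swap4:
  "(\<Sum>i\<in>A. \<Sum>j\<in>B. \<Sum>k\<in>C. \<Sum>l\<in>D. f i j k l) = (\<Sum>k\<in>C. \<Sum>l\<in>D. \<Sum>i\<in>A. \<Sum>j\<in>B. f i j k l)"
proof -
  have "(\<Sum>i\<in>A. \<Sum>j\<in>B. \<Sum>k\<in>C. \<Sum>l\<in>D. f i j k l) = (\<Sum>k\<in>C. \<Sum>i\<in>A. \<Sum>j\<in>B. \<Sum>l\<in>D. f i j k l)"
    by (rule sum_swap3)
  also have "\<dots> = (\<Sum>k\<in>C. \<Sum>l\<in>D. \<Sum>i\<in>A. \<Sum>j\<in>B. f i j k l)"
    by (rule sum.cong[OF refl], rule sum_swap3)
  finally show ?thesis .
qed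

lemma sum_list_map_pair:
  "(\<Sum>(p, q)\<leftarrow>map (\<lambda>(a', b'). (f a a', g b b')) ys. B p q) = (\<Sum>(a', b')\<leftarrow>ys. B (f a a') (g b b'))"
  by (induct ys) auto

lemma sum_list_map_triple_right:
  "(\<Sum>(p, q, r)\<leftarrow>map (\<lambda>(p, q). (p, q, b)) ys. T p q r) = (\<Sum>(p, q)\<leftarrow>ys. T p q b)"
  by (induct ys) auto

lemma sum_list_map_triple_left:
  "(\<Sum>(p, q, r)\<leftarrow>map (Pair a) ys. T p q r) = (\<Sum>(p, q)\<leftarrow>ys. T a p q)"
  by (induct ys) auto

lemma sum_list_concat_pairs:
  "(\<Sum>(p, q)\<leftarrow>concat (map (\<lambda>(a, b). map (\<lambda>(a', b'). (f a a', g b b')) ys) xs). B p q) =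
    (\<Sum>(a, b)\<leftarrow>xs. \<Sum>(a', b')\<leftarrow>ys. B (f a a') (g b b'))"
  by (induct xs) (auto simp: sum_list_map_pair simp del: map_map)

lemma sum_list_concat_triples_right:
  "(\<Sum>(p, q, r)\<leftarrow>concat (map (\<lambda>(a, b). map (\<lambda>(p, q). (p, q, b)) (D a)) xs). T p q r) =
    (\<Sum>(a, b)\<leftarrow>xs. \<Sum>(p, q)\<leftarrow>D a. T p q b)"
  by (induct xs) (auto simp: sum_list_map_triple_right simp del: map_map)

lemma sum_list_concat_triples_left:
  "(\<Sum>(p, q, r)\<leftarrow>concat (map (\<lambda>(a, b). map (\<lambda>(p, q). (a, p, q)) (D b)) xs). T p q r) =
    (\<Sum>(a, b)\<leftarrow>xs. \<Sum>(p, q)\<leftarrow>D b. T a p q)"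
  by (induct xs) (auto simp: sum_list_map_triple_left simp del: map_map)

lemma sum_list_pair_diff:
  "(\<Sum>(p, q)\<leftarrow>ks. F p q - G p q) =
    (\<Sum>(p, q)\<leftarrow>ks. F p q) - (\<Sum>(p, q)\<leftarrow>ks. (G p q :: 'a::ab_group_add))"
  by (induct ks) auto

lemma sum_list_pair_add:
  "(\<Sum>(p, q)\<leftarrow>ks. F p q + G p q) =
    (\<Sum>(p, q)\<leftarrow>ks. F p q) + (\<Sum>(p, q)\<leftarrow>ks. (G p q :: 'a::comm_monoid_add))"
  by (induct ks) (auto simp: algebra_simps)

lemma sum_list_pair_const_mult:
  "(\<Sum>(p, q)\<leftarrow>ks. c * F p q) = c * (\<Sum>(p, q)\<leftarrow>ks. (F p q :: 'a::semiring_0))"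
  by (induct ks) (auto simp: algebra_simps)

lemma tpair_append: "tpair f g (xs @ ys) = tpair f g xs + tpair f g ys"
  unfolding tpair_def by simp

lemma tpair_concat:
  "tpair f g (concat (map (\<lambda>(a, b). F a b) xs)) = (\<Sum>(a, b)\<leftarrow>xs. tpair f g (F a b))"
  unfolding tpair_def by (induct xs) auto

lemma tpair_map:
  "tpair f g (map (\<lambda>(p, q). (u p, v q)) ks) = (\<Sum>(p, q)\<leftarrow>ks. f (u p) * g (v q))"
  unfolding tpair_def by (induct ks) auto

lemma teq_refl: "teq s xs xs"
  unfolding teq_def by auto

locale finite_hopf =
  fixes s :: "'k::field \<Rightarrow> 'h::ring_1 \<Rightarrow> 'h"
    and \<Delta> :: "'h \<Rightarrow> ('h \<times> 'h) list" and \<epsilon> :: "'h \<Rightarrow> 'k" and S :: "'h \<Rightarrow> 'h"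
  assumes hopf: "hopf_algebra s \<Delta> \<epsilon> S"
begin

sublocale vs: vector_space s
  using hopf unfolding hopf_algebra_def by auto

lemma ex_finite_basis: "\<exists>B. finite B \<and> vs.independent B \<and> vs.span B = UNIV"
proof -
  obtain B0 where B0: "finite B0" "vs.span B0 = UNIV"
    using hopf unfolding hopf_algebra_def by auto
  obtain B where "B \<subseteq> B0" "vs.independent B" "B0 \<subseteq> vs.span B"
    using vs.maximal_independent_subset[of B0] by auto
  then show ?thesis using B0
    by (metis finite_subset top_le vs.span_mono vs.span_span)
qed

definition hbasis :: "'h set" where
  "hbasis = (SOME B. finite B \<and> vs.independent B \<and> vs.span B = UNIV)"

lemma hbasis_basis: "finite hbasis" "vs.independent hbasis" "vs.span hbasis = UNIV"
  using someI_ex[OF ex_finite_basis] unfolding hbasis_def by auto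

definition coord :: "'h \<Rightarrow> 'h \<Rightarrow> 'k" where
  "coord b v = vs.representation hbasis v b"

lemma basis_expansion: "(\<Sum>b\<in>hbasis. s (coord b v) b) = v"
  unfolding coord_def using hbasis_basis by (intro vs.sum_representation_eq) auto

definition linear_op :: "('h \<Rightarrow> 'h) \<Rightarrow> bool" where
  "linear_op f \<longleftrightarrow> (\<forall>x y c. f (x + y) = f x + f y \<and> f (s c x) = s c (f x))"

definition linear_form :: "('h \<Rightarrow> 'k) \<Rightarrow> bool" where
  "linear_form f \<longleftrightarrow> (\<forall>x y c. f (x + y) = f x + f y \<and> f (s c x) = c * f x)"

lemma lfun_iff_linear_form: "lfun s f \<longleftrightarrow> linear_form f"
proof -
  interpret k: vector_space "(*) :: 'k \<Rightarrow> 'k \<Rightarrow> 'k"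
    by unfold_locales (auto simp: algebra_simps)
  show ?thesis
    unfolding lfun_def linear_form_def Vector_Spaces.linear_iff
    using vs.vector_space_axioms k.vector_space_axioms by auto
qed

lemma linear_form_coord: "linear_form (coord b)"
  using vs.linear_representation[OF hbasis_basis(2,3), of b]
  unfolding lfun_iff_linear_form[symmetric] lfun_def coord_def by simp

lemmas hopf_axioms = hopf[unfolded hopf_algebra_def]

lemma comult_add: "teq s (\<Delta> (x + y)) (\<Delta> x @ \<Delta> y)"
  using hopf_axioms by blast

lemma comult_scale: "teq s (\<Delta> (s c x)) (map (\<lambda>(a, b). (s c a, b)) (\<Delta> x))"
  using hopf_axioms by blast

lemma coassoc: "teq3 s
    (concat (map (\<lambda>(a, b). map (\<lambda>(p, q). (p, q, b)) (\<Delta> a)) (\<Delta> x)))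
    (concat (map (\<lambda>(a, b). map (\<lambda>(p, q). (a, p, q)) (\<Delta> b)) (\<Delta> x)))"
  using hopf_axioms by blast

lemma comult_mult:
  "teq s (\<Delta> (x * y)) (concat (map (\<lambda>(a, b). map (\<lambda>(a', b'). (a * a', b * b')) (\<Delta> y)) (\<Delta> x)))"
  using hopf_axioms by blast

lemma comult_one: "teq s (\<Delta> 1) [(1, 1)]"
  using hopf_axioms by blast

lemma lfun_counit: "lfun s \<epsilon>"
  and counit_left: "(\<Sum>(a, b) \<leftarrow> \<Delta> x. s (\<epsilon> a) b) = x"
  and counit_right: "(\<Sum>(a, b) \<leftarrow> \<Delta> x. s (\<epsilon> b) a) = x"
  and counit_mult: "\<epsilon> (x * y) = \<epsilon> x * \<epsilon> y"
  and counit_one: "\<epsilon> 1 = 1"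
  using hopf_axioms by blast+

lemma linear_antipode: "Vector_Spaces.linear s s S"
  and antipode_left: "(\<Sum>(a, b) \<leftarrow> \<Delta> x. S a * b) = s (\<epsilon> x) 1"
  and antipode_right: "(\<Sum>(a, b) \<leftarrow> \<Delta> x. a * S b) = s (\<epsilon> x) 1"
  using hopf_axioms by blast+

lemma scale_mult_left: "s c x * y = s c (x * y)"
  and scale_mult_right: "x * s c y = s c (x * y)"
  using hopf_axioms by metis+

lemma linear_opD:
  "linear_op f \<Longrightarrow> f (x + y) = f x + f y" "linear_op f \<Longrightarrow> f (s c x) = s c (f x)"
  unfolding linear_op_def by auto

lemma linear_formD:
  "linear_form f \<Longrightarrow> f (x + y) = f x + f y" "linear_form f \<Longrightarrow> f (s c x) = c * f x"
  unfolding linear_form_def by auto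

lemma linear_form_counit: "linear_form \<epsilon>"
  using lfun_counit lfun_iff_linear_form by auto

lemma counit_add: "\<epsilon> (x + y) = \<epsilon> x + \<epsilon> y"
  and counit_scale: "\<epsilon> (s c x) = c * \<epsilon> x"
  using linear_formD[OF linear_form_counit] by auto

lemma coord_add: "coord b (x + y) = coord b x + coord b y"
  and coord_scale: "coord b (s c x) = c * coord b x"
  using linear_formD[OF linear_form_coord] by auto

lemma antipode_add: "S (x + y) = S x + S y"
  and antipode_scale: "S (s c x) = s c (S x)"
  using linear_antipode unfolding Vector_Spaces.linear_iff by auto

lemma antipode_zero: "S 0 = 0"
  using antipode_scale[of 0 0] by simp

lemma linear_form_zero: "linear_form f \<Longrightarrow> f 0 = 0"
  unfolding linear_form_def by (metis vs.scale_zero_left mult_zero_left)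

lemma linear_op_zero: "linear_op f \<Longrightarrow> f 0 = 0"
  unfolding linear_op_def by (metis vs.scale_zero_left)

lemma linear_form_diff: "linear_form f \<Longrightarrow> f (u - v) = f u - f v"
  by (metis linear_formD(1) diff_add_cancel eq_diff_eq)

lemma linear_form_sum: "linear_form f \<Longrightarrow> f (\<Sum>i\<in>A. g i) = (\<Sum>i\<in>A. f (g i))"
  by (induct A rule: infinite_finite_induct) (auto simp: linear_form_zero linear_form_def)

lemma linear_op_sum: "linear_op f \<Longrightarrow> f (\<Sum>i\<in>A. g i) = (\<Sum>i\<in>A. f (g i))"
  by (induct A rule: infinite_finite_induct) (auto simp: linear_op_zero linear_op_def)

lemma linear_op_sum_list:
  "linear_op f \<Longrightarrow> f (\<Sum>(a, b)\<leftarrow>xs. g a b) = (\<Sum>(a, b)\<leftarrow>xs. f (g a b))"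
  by (induct xs) (auto simp: linear_op_zero linear_opD)

lemma linear_form_counit_sum:
  "linear_form G \<Longrightarrow> (\<Sum>(p, q)\<leftarrow>xs. \<epsilon> p * G q) = G (\<Sum>(p, q)\<leftarrow>xs. s (\<epsilon> p) q)"
  by (induct xs) (auto simp: linear_form_zero linear_formD)

lemma linear_op_expansion: "linear_op f \<Longrightarrow> f v = (\<Sum>b\<in>hbasis. s (coord b v) (f b))"
proof -
  assume "linear_op f"
  then have "f (\<Sum>b\<in>hbasis. s (coord b v) b) = (\<Sum>b\<in>hbasis. s (coord b v) (f b))"
    by (simp add: linear_op_sum linear_opD)
  then show ?thesis by (simp add: basis_expansion)
qed

lemma linear_form_expansion: "linear_form f \<Longrightarrow> f v = (\<Sum>b\<in>hbasis. coord b v * f b)"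
proof -
  assume "linear_form f"
  then have "f (\<Sum>b\<in>hbasis. s (coord b v) b) = (\<Sum>b\<in>hbasis. coord b v * f b)"
    by (simp add: linear_form_sum linear_formD)
  then show ?thesis by (simp add: basis_expansion)
qed

definition bilinear :: "('h \<Rightarrow> 'h \<Rightarrow> 'h) \<Rightarrow> bool" where
  "bilinear B \<longleftrightarrow> (\<forall>b. linear_op (\<lambda>a. B a b)) \<and> (\<forall>a. linear_op (B a))"

definition trilinear :: "('h \<Rightarrow> 'h \<Rightarrow> 'h \<Rightarrow> 'h) \<Rightarrow> bool" where
  "trilinear T \<longleftrightarrow> (\<forall>b c. linear_op (\<lambda>a. T a b c)) \<and> (\<forall>a c. linear_op (\<lambda>b. T a b c)) \<and>
     (\<forall>a b. linear_op (T a b))"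

lemma bilinearD:
  "bilinear B \<Longrightarrow> B (x + y) b = B x b + B y b" "bilinear B \<Longrightarrow> B (s c x) b = s c (B x b)"
  "bilinear B \<Longrightarrow> B a (x + y) = B a x + B a y" "bilinear B \<Longrightarrow> B a (s c x) = s c (B a x)"
  unfolding bilinear_def linear_op_def by auto

lemma trilinearD:
  "trilinear T \<Longrightarrow> T (x + y) b c = T x b c + T y b c"
  "trilinear T \<Longrightarrow> T (s k x) b c = s k (T x b c)"
  "trilinear T \<Longrightarrow> T a (x + y) c = T a x c + T a y c"
  "trilinear T \<Longrightarrow> T a (s k x) c = s k (T a x c)"
  "trilinear T \<Longrightarrow> T a b (x + y) = T a b x + T a b y"
  "trilinear T \<Longrightarrow> T a b (s k x) = s k (T a b x)"
  unfolding trilinear_def linear_op_def by auto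

lemma trilinear_fun:
  "trilinear T \<Longrightarrow> T (x + y) = (\<lambda>b c. T x b c + T y b c)"
  "trilinear T \<Longrightarrow> T (s k x) = (\<lambda>b c. s k (T x b c))"
  by (intro ext, simp add: trilinear_def linear_op_def)+

lemma bilinear_expansion:
  assumes "bilinear B"
  shows "B a b = (\<Sum>i\<in>hbasis. \<Sum>j\<in>hbasis. s (coord i a * coord j b) (B i j))"
proof -
  have "B a b = (\<Sum>i\<in>hbasis. s (coord i a) (B i b))"
    by (rule linear_op_expansion) (use assms in \<open>simp add: bilinear_def\<close>)
  also have "\<dots> = (\<Sum>i\<in>hbasis. s (coord i a) (\<Sum>j\<in>hbasis. s (coord j b) (B i j)))"
    by (intro sum.cong refl arg_cong[where f = "s _"] linear_op_expansion)
      (use assms in \<open>simp add: bilinear_def\<close>)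
  finally show ?thesis by (simp add: vs.scale_sum_right)
qed

lemma trilinear_expansion:
  assumes "trilinear T"
  shows "T a b c = (\<Sum>i\<in>hbasis. \<Sum>j\<in>hbasis. \<Sum>k\<in>hbasis.
    s (coord i a * coord j b * coord k c) (T i j k))"
proof -
  have "T a b c = (\<Sum>i\<in>hbasis. s (coord i a) (T i b c))"
    by (rule linear_op_expansion) (use assms in \<open>simp add: trilinear_def\<close>)
  also have "\<dots> = (\<Sum>i\<in>hbasis. s (coord i a) (\<Sum>j\<in>hbasis. s (coord j b) (T i j c)))"
    by (intro sum.cong refl arg_cong[where f = "s _"] linear_op_expansion)
      (use assms in \<open>simp add: trilinear_def\<close>)
  also have "\<dots> = (\<Sum>i\<in>hbasis. s (coord i a) (\<Sum>j\<in>hbasis. s (coord j b)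
      (\<Sum>k\<in>hbasis. s (coord k c) (T i j k))))"
    by (intro sum.cong refl arg_cong[where f = "s _"] linear_op_expansion)
      (use assms in \<open>simp add: trilinear_def\<close>)
  finally show ?thesis by (simp add: vs.scale_sum_right mult.assoc)
qed

lemma sum_list_bilinear:
  assumes "bilinear B"
  shows "(\<Sum>(a, b)\<leftarrow>xs. B a b) =
    (\<Sum>i\<in>hbasis. \<Sum>j\<in>hbasis. s (tpair (coord i) (coord j) xs) (B i j))"
proof (induct xs)
  case (Cons p xs)
  obtain a b where "p = (a, b)" by force
  with Cons show ?case
    by (simp add: tpair_def bilinear_expansion[OF assms, of a b] vs.scale_left_distrib sum.distrib)
qed (simp add: tpair_def)

lemma sum_list_trilinear:
  assumes "trilinear T"
  shows "(\<Sum>(a, b, c)\<leftarrow>xs. T a b c) =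
    (\<Sum>i\<in>hbasis. \<Sum>j\<in>hbasis. \<Sum>k\<in>hbasis. s (tpair3 (coord i) (coord j) (coord k) xs) (T i j k))"
proof (induct xs)
  case (Cons p xs)
  obtain a b c where "p = (a, b, c)" by (cases p) force
  with Cons show ?case
    by (simp add: tpair3_def trilinear_expansion[OF assms, of a b c] vs.scale_left_distrib
        sum.distrib)
qed (simp add: tpair3_def)

lemma teq_tpair_coord: "teq s xs ys \<Longrightarrow> tpair (coord i) (coord j) xs = tpair (coord i) (coord j) ys"
  unfolding teq_def using linear_form_coord lfun_iff_linear_form by blast

lemma tpair_scale:
  "linear_form f \<Longrightarrow> tpair f g (map (\<lambda>(a, b). (s c a, b)) xs) = c * tpair f g xs"
  unfolding tpair_def by (induct xs) (auto simp: linear_form_def algebra_simps)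

subsection \<open>Sweedler sums\<close>

definition comult_coord :: "'h \<Rightarrow> 'h \<Rightarrow> 'h \<Rightarrow> 'k" where
  "comult_coord i j x = tpair (coord i) (coord j) (\<Delta> x)"

definition sweedler :: "'h \<Rightarrow> ('h \<Rightarrow> 'h \<Rightarrow> 'h) \<Rightarrow> 'h" where
  "sweedler x B = (\<Sum>i\<in>hbasis. \<Sum>j\<in>hbasis. s (comult_coord i j x) (B i j))"

lemma sweedler_teq:
  "bilinear B \<Longrightarrow> teq s (\<Delta> x) ys \<Longrightarrow> sweedler x B = (\<Sum>(a, b)\<leftarrow>ys. B a b)"
  unfolding sweedler_def comult_coord_def by (simp add: sum_list_bilinear teq_tpair_coord)

lemma sweedler_comult: "bilinear B \<Longrightarrow> sweedler x B = (\<Sum>(a, b)\<leftarrow>\<Delta> x. B a b)"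
  using sweedler_teq teq_refl by blast

lemma comult_coord_add: "comult_coord i j (x + y) = comult_coord i j x + comult_coord i j y"
  unfolding comult_coord_def using teq_tpair_coord[OF comult_add] tpair_append by simp

lemma comult_coord_scale: "comult_coord i j (s c x) = c * comult_coord i j x"
  unfolding comult_coord_def
  using teq_tpair_coord[OF comult_scale] tpair_scale[OF linear_form_coord] by simp

lemma sweedler_add: "sweedler (x + y) B = sweedler x B + sweedler y B"
  unfolding sweedler_def by (simp add: comult_coord_add vs.scale_left_distrib sum.distrib)

lemma sweedler_scale: "sweedler (s c x) B = s c (sweedler x B)"
  unfolding sweedler_def by (simp add: comult_coord_scale vs.scale_sum_right)

lemma sweedler_zero: "sweedler 0 B = 0"
  using sweedler_scale[of 0 0 B] by simp

lemma sweedler_add_fun: "sweedler x (\<lambda>a b. F a b + G a b) = sweedler x F + sweedler x G"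
  unfolding sweedler_def by (simp add: vs.scale_right_distrib sum.distrib)

lemma sweedler_scale_fun: "sweedler x (\<lambda>a b. s c (F a b)) = s c (sweedler x F)"
  unfolding sweedler_def by (simp add: vs.scale_sum_right mult.commute)

lemma sweedler_zero_fun: "sweedler x (\<lambda>a b. 0) = 0"
  unfolding sweedler_def by simp

lemma sweedler_cong: "(\<And>a b. F a b = G a b) \<Longrightarrow> sweedler x F = sweedler x G"
  by (simp add: sweedler_def)

lemma sweedler_sum_fun: "sweedler x (\<lambda>a b. \<Sum>i\<in>A. F i a b) = (\<Sum>i\<in>A. sweedler x (F i))"
  unfolding sweedler_def vs.scale_sum_right by (rule sum_swap3)

lemma linear_op_sweedler: "linear_op f \<Longrightarrow> f (sweedler x F) = sweedler x (\<lambda>a b. f (F a b))"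
  unfolding sweedler_def by (simp add: linear_op_sum) (simp add: linear_op_def)

lemma sweedler_commute:
  "sweedler x (\<lambda>a b. sweedler y (F a b)) = sweedler y (\<lambda>c d. sweedler x (\<lambda>a b. F a b c d))"
proof -
  have "sweedler x (\<lambda>a b. sweedler y (F a b)) = (\<Sum>i\<in>hbasis. \<Sum>j\<in>hbasis. \<Sum>k\<in>hbasis. \<Sum>l\<in>hbasis.
      s (comult_coord i j x * comult_coord k l y) (F i j k l))"
    unfolding sweedler_def by (simp add: vs.scale_sum_right)
  also have "\<dots> = (\<Sum>k\<in>hbasis. \<Sum>l\<in>hbasis. \<Sum>i\<in>hbasis. \<Sum>j\<in>hbasis.
      s (comult_coord i j x * comult_coord k l y) (F i j k l))"
    by (rule sum_swap4)
  also have "\<dots> = sweedler y (\<lambda>c d. sweedler x (\<lambda>a b. F a b c d))"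
    unfolding sweedler_def by (simp add: vs.scale_sum_right mult.commute)
  finally show ?thesis .
qed

lemmas linear_simps = distrib_left distrib_right scale_mult_left scale_mult_right
  antipode_add antipode_scale counit_add counit_scale coord_add coord_scale
  vs.scale_left_distrib vs.scale_right_distrib vs.scale_scale
  sweedler_add sweedler_scale sweedler_add_fun sweedler_scale_fun

lemma sweedler_mult:
  assumes B: "bilinear B"
  shows "sweedler (x * y) B = sweedler x (\<lambda>a b. sweedler y (\<lambda>p q. B (a * p) (b * q)))"
proof -
  have b1: "bilinear (\<lambda>p q. B (a * p) (b * q))" for a b
    unfolding bilinear_def linear_op_def by (simp add: linear_simps bilinearD[OF B])
  have b2: "bilinear (\<lambda>a b. sweedler y (\<lambda>p q. B (a * p) (b * q)))"
    unfolding bilinear_def linear_op_def by (simp add: linear_simps bilinearD[OF B])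
  have "sweedler (x * y) B = (\<Sum>(a, b)\<leftarrow>\<Delta> x. \<Sum>(a', b')\<leftarrow>\<Delta> y. B (a * a') (b * b'))"
    by (subst sweedler_teq[OF B comult_mult]) (rule sum_list_concat_pairs)
  also have "\<dots> = (\<Sum>(a, b)\<leftarrow>\<Delta> x. sweedler y (\<lambda>p q. B (a * p) (b * q)))"
    by (simp add: sweedler_comult[OF b1])
  also have "\<dots> = sweedler x (\<lambda>a b. sweedler y (\<lambda>p q. B (a * p) (b * q)))"
    by (simp add: sweedler_comult[OF b2])
  finally show ?thesis .
qed

lemma sweedler_one: "bilinear B \<Longrightarrow> sweedler 1 B = B 1 1"
  by (subst sweedler_teq[OF _ comult_one]) auto

lemma sweedler_coassoc:
  assumes T: "trilinear T"
  shows "sweedler x (\<lambda>a b. sweedler a (\<lambda>p q. T p q b)) =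
    sweedler x (\<lambda>a b. sweedler b (\<lambda>p q. T a p q))"
proof -
  have b1: "bilinear (\<lambda>p q. T p q b)" and b2: "bilinear (\<lambda>p q. T a p q)" for a b
    using T unfolding bilinear_def trilinear_def by auto
  have b3: "bilinear (\<lambda>a b. sweedler a (\<lambda>p q. T p q b))"
    and b4: "bilinear (\<lambda>a b. sweedler b (\<lambda>p q. T a p q))"
    unfolding bilinear_def linear_op_def
    by (simp_all add: linear_simps trilinearD[OF T] trilinear_fun[OF T])
  have "sweedler x (\<lambda>a b. sweedler a (\<lambda>p q. T p q b)) =
      (\<Sum>(a, b)\<leftarrow>\<Delta> x. \<Sum>(p, q)\<leftarrow>\<Delta> a. T p q b)"
    by (subst sweedler_comult[OF b3]) (simp add: sweedler_comult[OF b1])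
  also have "\<dots> = (\<Sum>(p, q, r) \<leftarrow> concat (map (\<lambda>(a, b). map (\<lambda>(p, q). (p, q, b)) (\<Delta> a)) (\<Delta> x)).
      T p q r)"
    by (rule sum_list_concat_triples_right[symmetric])
  also have "\<dots> = (\<Sum>(p, q, r) \<leftarrow> concat (map (\<lambda>(a, b). map (\<lambda>(p, q). (a, p, q)) (\<Delta> b)) (\<Delta> x)).
      T p q r)"
    using coassoc[of x] linear_form_coord lfun_iff_linear_form
    unfolding sum_list_trilinear[OF T] teq3_def by simp
  also have "\<dots> = (\<Sum>(a, b)\<leftarrow>\<Delta> x. \<Sum>(p, q)\<leftarrow>\<Delta> b. T a p q)"
    by (rule sum_list_concat_triples_left)
  also have "\<dots> = sweedler x (\<lambda>a b. sweedler b (\<lambda>p q. T a p q))"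
    by (subst sweedler_comult[OF b4]) (simp add: sweedler_comult[OF b2])
  finally show ?thesis .
qed

lemma sweedler_counit_left:
  assumes G: "linear_op G"
  shows "sweedler x (\<lambda>a b. s (\<epsilon> a) (G b)) = G x"
proof -
  have b: "bilinear (\<lambda>a b. s (\<epsilon> a) (G b))"
    unfolding bilinear_def linear_op_def by (simp add: linear_simps linear_opD[OF G])
  have "G x = G (\<Sum>(a, b) \<leftarrow> \<Delta> x. s (\<epsilon> a) b)"
    by (simp add: counit_left linear_opD[OF G])
  also have "\<dots> = (\<Sum>(a, b) \<leftarrow> \<Delta> x. s (\<epsilon> a) (G b))"
    by (simp add: linear_op_sum_list[OF G] linear_opD[OF G])
  finally have "G x = (\<Sum>(a, b) \<leftarrow> \<Delta> x. s (\<epsilon> a) (G b))" .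
  then show ?thesis by (simp add: sweedler_comult[OF b])
qed

lemma sweedler_counit_right:
  assumes G: "linear_op G"
  shows "sweedler x (\<lambda>a b. s (\<epsilon> b) (G a)) = G x"
proof -
  have b: "bilinear (\<lambda>a b. s (\<epsilon> b) (G a))"
    unfolding bilinear_def linear_op_def by (simp add: linear_simps linear_opD[OF G])
  have "G x = G (\<Sum>(a, b) \<leftarrow> \<Delta> x. s (\<epsilon> b) a)"
    by (simp add: counit_right linear_opD[OF G])
  also have "\<dots> = (\<Sum>(a, b) \<leftarrow> \<Delta> x. s (\<epsilon> b) (G a))"
    by (simp add: linear_op_sum_list[OF G] linear_opD[OF G])
  finally have "G x = (\<Sum>(a, b) \<leftarrow> \<Delta> x. s (\<epsilon> b) (G a))" .
  then show ?thesis by (simp add: sweedler_comult[OF b])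
qed

lemma sweedler_antipode_left:
  assumes F: "linear_op F"
  shows "sweedler x (\<lambda>a b. F (S a * b)) = s (\<epsilon> x) (F 1)"
proof -
  have b: "bilinear (\<lambda>a b. F (S a * b))"
    unfolding bilinear_def linear_op_def by (simp add: linear_simps linear_opD[OF F])
  have "s (\<epsilon> x) (F 1) = F (\<Sum>(a, b) \<leftarrow> \<Delta> x. S a * b)"
    by (simp add: antipode_left linear_opD[OF F])
  also have "\<dots> = (\<Sum>(a, b) \<leftarrow> \<Delta> x. F (S a * b))"
    by (simp add: linear_op_sum_list[OF F] linear_opD[OF F])
  finally have "s (\<epsilon> x) (F 1) = (\<Sum>(a, b) \<leftarrow> \<Delta> x. F (S a * b))" .
  then show ?thesis by (simp add: sweedler_comult[OF b])
qed

lemma sweedler_antipode_right: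
  assumes F: "linear_op F"
  shows "sweedler x (\<lambda>a b. F (a * S b)) = s (\<epsilon> x) (F 1)"
proof -
  have b: "bilinear (\<lambda>a b. F (a * S b))"
    unfolding bilinear_def linear_op_def by (simp add: linear_simps linear_opD[OF F])
  have "s (\<epsilon> x) (F 1) = F (\<Sum>(a, b) \<leftarrow> \<Delta> x. a * S b)"
    by (simp add: antipode_right linear_opD[OF F])
  also have "\<dots> = (\<Sum>(a, b) \<leftarrow> \<Delta> x. F (a * S b))"
    by (simp add: linear_op_sum_list[OF F] linear_opD[OF F])
  finally have "s (\<epsilon> x) (F 1) = (\<Sum>(a, b) \<leftarrow> \<Delta> x. F (a * S b))" .
  then show ?thesis by (simp add: sweedler_comult[OF b])
qed

lemma linear_op_id: "linear_op (\<lambda>x. x)"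
  unfolding linear_op_def by simp

lemma linear_op_antipode: "linear_op S"
  unfolding linear_op_def by (simp add: antipode_add antipode_scale)

lemma linear_op_mult_left: "linear_op (\<lambda>v. c * v)"
  and linear_op_mult_right: "linear_op (\<lambda>v. v * c)"
  unfolding linear_op_def by (simp_all add: linear_simps)

lemma linear_op_sweedler_arg: "linear_op (\<lambda>y. sweedler y C)"
  unfolding linear_op_def by (simp add: sweedler_add sweedler_scale)

lemma linear_op_sweedler_fun:
  "(\<And>b f. linear_op (\<lambda>v. F b f v)) \<Longrightarrow> linear_op (\<lambda>v. sweedler r (\<lambda>b f. F b f v))"
  unfolding linear_op_def by (simp add: sweedler_add_fun sweedler_scale_fun)

lemma sweedler_sweedler: "sweedler w (\<lambda>a b. sweedler (f a b) C) = sweedler (sweedler w f) C"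
  by (subst linear_op_sweedler[OF linear_op_sweedler_arg]) (rule refl)

lemma linear_form_sweedler:
  assumes g: "linear_form g"
  shows "s (g (sweedler x F)) 1 = sweedler x (\<lambda>a b. s (g (F a b)) 1)"
proof -
  have "linear_op (\<lambda>v. s (g v) 1)"
    unfolding linear_op_def by (simp add: linear_formD[OF g] linear_simps)
  then show ?thesis by (rule linear_op_sweedler)
qed

subsection \<open>The antipode\<close>

lemma antipode_one: "S 1 = 1"
proof -
  have b: "bilinear (\<lambda>a b. S a * b)"
    unfolding bilinear_def linear_op_def by (simp add: linear_simps)
  have "S 1 = sweedler 1 (\<lambda>a b. S a * b)" by (simp add: sweedler_one[OF b])
  also have "\<dots> = 1"
    using sweedler_antipode_left[OF linear_op_id, of 1] by (simp add: counit_one)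
  finally show ?thesis .
qed

lemma counit_antipode: "\<epsilon> (S x) = \<epsilon> x"
proof -
  have "s (\<epsilon> (S x)) 1 = s (\<epsilon> (S (sweedler x (\<lambda>a b. s (\<epsilon> b) a)))) 1"
    by (simp add: sweedler_counit_right[OF linear_op_id])
  also have "\<dots> = sweedler x (\<lambda>a b. s (\<epsilon> (S (s (\<epsilon> b) a))) 1)"
    by (simp add: linear_op_sweedler[OF linear_op_antipode]
        linear_form_sweedler[OF linear_form_counit])
  also have "\<dots> = sweedler x (\<lambda>a b. s (\<epsilon> (S a * b)) 1)"
    by (simp add: antipode_scale counit_scale counit_mult mult.commute)
  also have "\<dots> = s (\<epsilon> (sweedler x (\<lambda>a b. S a * b))) 1"
    by (simp add: linear_form_sweedler[OF linear_form_counit])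
  also have "\<dots> = s (\<epsilon> x) 1"
    using sweedler_antipode_left[OF linear_op_id, of x] by (simp add: counit_scale counit_one)
  finally show ?thesis by simp
qed

lemma sweedler_antipode_pair_left:
  assumes F: "linear_op F"
  shows "sweedler v (\<lambda>a b. sweedler u (\<lambda>p q. F (S p * S a * (b * q)))) =
    s (\<epsilon> v * \<epsilon> u) (F 1)"
proof -
  have "sweedler v (\<lambda>a b. sweedler u (\<lambda>p q. F (S p * S a * (b * q)))) =
      sweedler u (\<lambda>p q. sweedler v (\<lambda>a b. (\<lambda>z. F (S p * z * q)) (S a * b)))"
    by (subst sweedler_commute) (simp add: mult.assoc)
  also have "\<dots> = sweedler u (\<lambda>p q. s (\<epsilon> v) (F (S p * q)))"
  proof (rule sweedler_cong)
    fix p q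
    have "linear_op (\<lambda>z. F (S p * z * q))"
      unfolding linear_op_def by (simp add: linear_simps linear_opD[OF F])
    then show "sweedler v (\<lambda>a b. (\<lambda>z. F (S p * z * q)) (S a * b)) = s (\<epsilon> v) (F (S p * q))"
      by (subst sweedler_antipode_left) simp_all
  qed
  also have "\<dots> = s (\<epsilon> v) (s (\<epsilon> u) (F 1))"
    using sweedler_antipode_left[OF F, of u] by (simp add: sweedler_scale_fun)
  finally show ?thesis by (simp add: mult.commute)
qed

lemma sweedler_antipode_pair_right:
  assumes F: "linear_op F"
  shows "sweedler w (\<lambda>b c. sweedler z (\<lambda>q r. F (b * q * S (c * r)))) = s (\<epsilon> w * \<epsilon> z) (F 1)"
proof -
  have b: "bilinear (\<lambda>u v. F (u * S v))"
    unfolding bilinear_def linear_op_def by (simp add: linear_simps linear_opD[OF F])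
  have "sweedler (w * z) (\<lambda>u v. F (u * S v)) = s (\<epsilon> (w * z)) (F 1)"
    by (rule sweedler_antipode_right[OF F])
  then show ?thesis by (simp add: sweedler_mult[OF b] counit_mult)
qed

lemma sweedler4_contract_right:
  "sweedler x (\<lambda>a w. sweedler y (\<lambda>p z. sweedler w (\<lambda>b c. sweedler z
     (\<lambda>q r. S p * S a * (b * q) * S (c * r))))) = S y * S x"
proof -
  have "sweedler x (\<lambda>a w. sweedler y (\<lambda>p z. sweedler w (\<lambda>b c. sweedler z
          (\<lambda>q r. S p * S a * (b * q) * S (c * r))))) =
        sweedler x (\<lambda>a w. sweedler y (\<lambda>p z. s (\<epsilon> w * \<epsilon> z) (S p * S a)))"
  proof (rule sweedler_cong, rule sweedler_cong)
    fix a w p z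
    show "sweedler w (\<lambda>b c. sweedler z (\<lambda>q r. S p * S a * (b * q) * S (c * r))) =
        s (\<epsilon> w * \<epsilon> z) (S p * S a)"
      using sweedler_antipode_pair_right[OF linear_op_mult_left[of "S p * S a"], of w z]
      by (simp add: mult.assoc)
  qed
  also have "\<dots> = sweedler x (\<lambda>a w. s (\<epsilon> w) (sweedler y (\<lambda>p z. s (\<epsilon> z) (S p * S a))))"
    by (simp add: sweedler_scale_fun[symmetric] vs.scale_scale mult.commute)
  also have "\<dots> = sweedler x (\<lambda>a w. s (\<epsilon> w) (S y * S a))"
  proof (rule sweedler_cong)
    fix a w
    have "linear_op (\<lambda>p. S p * S a)" unfolding linear_op_def by (simp add: linear_simps)
    then show "s (\<epsilon> w) (sweedler y (\<lambda>p z. s (\<epsilon> z) (S p * S a))) = s (\<epsilon> w) (S y * S a)"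
      by (simp add: sweedler_counit_right)
  qed
  also have "\<dots> = S y * S x"
    using sweedler_counit_right[of "\<lambda>a. S y * S a" x] unfolding linear_op_def
    by (simp add: linear_simps)
  finally show ?thesis .
qed

lemma sweedler4_contract_left:
  "sweedler x (\<lambda>v c. sweedler y (\<lambda>u r. sweedler v (\<lambda>a b. sweedler u
     (\<lambda>p q. S p * S a * (b * q) * S (c * r))))) = S (x * y)"
proof -
  have "sweedler x (\<lambda>v c. sweedler y (\<lambda>u r. sweedler v (\<lambda>a b. sweedler u
          (\<lambda>p q. S p * S a * (b * q) * S (c * r))))) =
        sweedler x (\<lambda>v c. sweedler y (\<lambda>u r. s (\<epsilon> v * \<epsilon> u) (S (c * r))))"
  proof (rule sweedler_cong, rule sweedler_cong)
    fix v c u r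
    show "sweedler v (\<lambda>a b. sweedler u (\<lambda>p q. S p * S a * (b * q) * S (c * r))) =
        s (\<epsilon> v * \<epsilon> u) (S (c * r))"
      using sweedler_antipode_pair_left[OF linear_op_mult_right[of "S (c * r)"], of v u]
      by (simp add: mult.assoc)
  qed
  also have "\<dots> = sweedler x (\<lambda>v c. s (\<epsilon> v) (sweedler y (\<lambda>u r. s (\<epsilon> u) (S (c * r)))))"
    by (simp add: sweedler_scale_fun[symmetric] vs.scale_scale)
  also have "\<dots> = sweedler x (\<lambda>v c. s (\<epsilon> v) (S (c * y)))"
  proof (rule sweedler_cong)
    fix v c
    have "linear_op (\<lambda>r. S (c * r))" unfolding linear_op_def by (simp add: linear_simps)
    then show "s (\<epsilon> v) (sweedler y (\<lambda>u r. s (\<epsilon> u) (S (c * r)))) = s (\<epsilon> v) (S (c * y))"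
      by (simp add: sweedler_counit_left)
  qed
  also have "\<dots> = S (x * y)"
    using sweedler_counit_left[of "\<lambda>c. S (c * y)" x] unfolding linear_op_def
    by (simp add: linear_simps)
  finally show ?thesis .
qed

text \<open>The element \<open>\<Sum> S(y\<^sub>1) S(x\<^sub>1) (x\<^sub>2y\<^sub>2) S(x\<^sub>3y\<^sub>3)\<close> contracts to \<open>S y S x\<close> on the
  right and to \<open>S(xy)\<close> on the left; coassociativity identifies the two bracketings.\<close>

lemma antipode_mult: "S (x * y) = S y * S x"
proof -
  define \<Phi> where "\<Phi> a b c p q r = S p * S a * (b * q) * S (c * r)" for a b c p q r
  have t1: "trilinear (\<lambda>a b c. sweedler y (\<lambda>p z. sweedler z (\<lambda>q r. \<Phi> a b c p q r)))"
    unfolding trilinear_def linear_op_def \<Phi>_def by (simp add: linear_simps)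
  have t2: "trilinear (\<lambda>p q r. \<Phi> a b c p q r)" for a b c
    unfolding trilinear_def linear_op_def \<Phi>_def by (simp add: linear_simps)
  have "S y * S x =
      sweedler x (\<lambda>a w. sweedler y (\<lambda>p z. sweedler w (\<lambda>b c. sweedler z (\<lambda>q r. \<Phi> a b c p q r))))"
    unfolding \<Phi>_def by (rule sweedler4_contract_right[symmetric])
  also have "\<dots> =
      sweedler x (\<lambda>a w. sweedler w (\<lambda>b c. sweedler y (\<lambda>p z. sweedler z (\<lambda>q r. \<Phi> a b c p q r))))"
    by (rule sweedler_cong, rule sweedler_commute)
  also have "\<dots> =
      sweedler x (\<lambda>v c. sweedler v (\<lambda>a b. sweedler y (\<lambda>p z. sweedler z (\<lambda>q r. \<Phi> a b c p q r))))"
    by (rule sweedler_coassoc[OF t1, symmetric])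
  also have "\<dots> =
      sweedler x (\<lambda>v c. sweedler v (\<lambda>a b. sweedler y (\<lambda>u r. sweedler u (\<lambda>p q. \<Phi> a b c p q r))))"
    by (rule sweedler_cong, rule sweedler_cong, rule sweedler_coassoc[OF t2, symmetric])
  also have "\<dots> =
      sweedler x (\<lambda>v c. sweedler y (\<lambda>u r. sweedler v (\<lambda>a b. sweedler u (\<lambda>p q. \<Phi> a b c p q r))))"
    by (rule sweedler_cong, rule sweedler_commute)
  also have "\<dots> = S (x * y)"
    unfolding \<Phi>_def by (rule sweedler4_contract_left)
  finally show ?thesis by simp
qed



lemma sweedler_antipode_contract_outer:
  assumes B: "bilinear B"
  shows "sweedler w (\<lambda>x2 x3. sweedler x2 (\<lambda>p q. sweedler (S x3)
      (\<lambda>u v. B (S a2 * p * u) (S a1 * q * v)))) = s (\<epsilon> w) (B (S a2) (S a1))"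
proof -
  define C where "C U V = B (S a2 * U) (S a1 * V)" for U V
  have bC: "bilinear C"
    unfolding bilinear_def linear_op_def C_def by (simp add: linear_simps bilinearD[OF B])
  have "sweedler w (\<lambda>x2 x3. sweedler x2 (\<lambda>p q. sweedler (S x3)
      (\<lambda>u v. B (S a2 * p * u) (S a1 * q * v)))) = sweedler w (\<lambda>x2 x3. sweedler (x2 * S x3) C)"
    by (simp add: sweedler_mult[OF bC] C_def mult.assoc)
  also have "\<dots> = sweedler (sweedler w (\<lambda>x2 x3. x2 * S x3)) C"
    by (rule sweedler_sweedler)
  also have "\<dots> = sweedler (s (\<epsilon> w) 1) C"
    using sweedler_antipode_right[OF linear_op_id, of w] by simp
  also have "\<dots> = s (\<epsilon> w) (B (S a2) (S a1))"
    by (simp add: sweedler_scale sweedler_one[OF bC] C_def)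
  finally show ?thesis .
qed

lemma sweedler_antipode_contract_inner:
  assumes B: "bilinear B"
  shows "sweedler v (\<lambda>x1 x2. sweedler x1 (\<lambda>a1 a2. sweedler x2 (\<lambda>p q. sweedler (S x3)
      (\<lambda>u v. B (S a2 * p * u) (S a1 * q * v))))) = s (\<epsilon> v) (sweedler (S x3) B)"
proof -
  define G where "G U V = sweedler (S x3) (\<lambda>u v. B (U * u) (V * v))" for U V
  have GL: "G (x + y) V = G x V + G y V" "G (s c x) V = s c (G x V)"
      "G U (x + y) = G U x + G U y" "G U (s c x) = s c (G U x)" for x y c U V
    unfolding G_def by (simp_all add: linear_simps bilinearD[OF B])
  define F where "F a1 a2 x2 = sweedler x2 (\<lambda>p q. G (S a2 * p) (S a1 * q))" for a1 a2 x2
  have tF: "trilinear F" unfolding trilinear_def linear_op_def F_def by (simp add: linear_simps GL)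
  have contract: "sweedler r (\<lambda>a2 x2. F a1 a2 x2) = G 1 (S a1 * r)" for a1 r
  proof -
    have t2: "trilinear (\<lambda>a2 p q. G (S a2 * p) (S a1 * q))"
      unfolding trilinear_def linear_op_def by (simp add: linear_simps GL)
    have "sweedler r (\<lambda>a2 x2. F a1 a2 x2) =
        sweedler r (\<lambda>m q. sweedler m (\<lambda>a2 p. G (S a2 * p) (S a1 * q)))"
      unfolding F_def by (rule sweedler_coassoc[OF t2, symmetric])
    also have "\<dots> = sweedler r (\<lambda>m q. s (\<epsilon> m) (G 1 (S a1 * q)))"
    proof (rule sweedler_cong)
      fix m q
      have "linear_op (\<lambda>z. G z (S a1 * q))" unfolding linear_op_def by (simp add: GL)
      then show "sweedler m (\<lambda>a2 p. G (S a2 * p) (S a1 * q)) = s (\<epsilon> m) (G 1 (S a1 * q))"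
        by (rule sweedler_antipode_left)
    qed
    also have "\<dots> = G 1 (S a1 * r)"
      by (rule sweedler_counit_left) (simp add: linear_op_def GL linear_simps)
    finally show ?thesis .
  qed
  have "sweedler v (\<lambda>x1 x2. sweedler x1 (\<lambda>a1 a2. sweedler x2 (\<lambda>p q. sweedler (S x3)
      (\<lambda>u v. B (S a2 * p * u) (S a1 * q * v))))) = sweedler v (\<lambda>x1 x2. sweedler x1 (\<lambda>a1 a2. F a1 a2 x2))"
    unfolding F_def G_def by (simp add: mult.assoc)
  also have "\<dots> = sweedler v (\<lambda>a1 r. sweedler r (\<lambda>a2 x2. F a1 a2 x2))"
    by (rule sweedler_coassoc[OF tF])
  also have "\<dots> = sweedler v (\<lambda>a1 r. G 1 (S a1 * r))"
    by (simp add: contract)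
  also have "\<dots> = s (\<epsilon> v) (G 1 1)"
    by (rule sweedler_antipode_left) (simp add: linear_op_def GL)
  finally show ?thesis unfolding G_def by simp
qed

lemma sweedler_antipode:
  assumes B: "bilinear B"
  shows "sweedler (S x) B = sweedler x (\<lambda>a b. B (S b) (S a))"
proof -
  define T where "T x1 x2 x3 = sweedler x1 (\<lambda>a1 a2. sweedler x2 (\<lambda>p q. sweedler (S x3)
      (\<lambda>u v. B (S a2 * p * u) (S a1 * q * v))))" for x1 x2 x3
  have tT: "trilinear T"
    unfolding trilinear_def linear_op_def T_def by (simp add: linear_simps bilinearD[OF B])
  have "sweedler x (\<lambda>a b. B (S b) (S a)) =
      sweedler x (\<lambda>x1 w. s (\<epsilon> w) (sweedler x1 (\<lambda>a1 a2. B (S a2) (S a1))))"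
    by (rule sweedler_counit_right[OF linear_op_sweedler_arg, symmetric])
  also have "\<dots> = sweedler x (\<lambda>x1 w. sweedler w (\<lambda>x2 x3. T x1 x2 x3))"
    unfolding T_def
    by (rule sweedler_cong, subst sweedler_commute)
      (simp add: sweedler_antipode_contract_outer[OF B] sweedler_scale_fun)
  also have "\<dots> = sweedler x (\<lambda>v x3. sweedler v (\<lambda>x1 x2. T x1 x2 x3))"
    by (rule sweedler_coassoc[OF tT, symmetric])
  also have "\<dots> = sweedler x (\<lambda>v x3. s (\<epsilon> v) (sweedler (S x3) B))"
    unfolding T_def by (simp add: sweedler_antipode_contract_inner[OF B])
  also have "\<dots> = sweedler (S x) B"
    by (rule sweedler_counit_left) (simp add: linear_op_def linear_simps)
  finally show ?thesis by simp
qed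

subsection \<open>Integrals and injectivity of the antipode\<close>

definition hit :: "('h \<Rightarrow> 'k) \<Rightarrow> 'h \<Rightarrow> 'h" where
  "hit m y = sweedler y (\<lambda>a b. s (m b) a)"

lemma linear_op_hit: "linear_op (hit m)"
  unfolding linear_op_def hit_def by (simp add: sweedler_add sweedler_scale)

lemma hit_add: "hit m (x + y) = hit m x + hit m y"
  and hit_scale: "hit m (s c x) = s c (hit m x)"
  using linear_op_hit unfolding linear_op_def by auto

lemma sweedler_antipode_cancel:
  assumes m: "linear_form m"
  shows "sweedler h (\<lambda>a b. sweedler a (\<lambda>a1 a2. s (m (y2 * S a1)) (y1 * S a2 * b))) =
    s (m (y2 * S h)) y1"
proof -
  have t: "trilinear (\<lambda>a1 a2 b. s (m (y2 * S a1)) (y1 * S a2 * b))"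
    unfolding trilinear_def linear_op_def by (simp add: linear_simps linear_formD[OF m])
  have "sweedler h (\<lambda>a b. sweedler a (\<lambda>a1 a2. s (m (y2 * S a1)) (y1 * S a2 * b))) =
      sweedler h (\<lambda>a1 c. sweedler c (\<lambda>a2 b. s (m (y2 * S a1)) (y1 * S a2 * b)))"
    by (rule sweedler_coassoc[OF t])
  also have "\<dots> = sweedler h (\<lambda>a1 c. s (\<epsilon> c) (s (m (y2 * S a1)) y1))"
  proof (rule sweedler_cong)
    fix a1 c
    have "linear_op (\<lambda>z. s (m (y2 * S a1)) (y1 * z))"
      unfolding linear_op_def by (simp add: linear_simps)
    from sweedler_antipode_left[OF this, of c]
    show "sweedler c (\<lambda>a2 b. s (m (y2 * S a1)) (y1 * S a2 * b)) = s (\<epsilon> c) (s (m (y2 * S a1)) y1)"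
      by (simp add: mult.assoc)
  qed
  also have "\<dots> = s (m (y2 * S h)) y1"
    by (rule sweedler_counit_right) (simp add: linear_op_def linear_simps linear_formD[OF m])
  finally show ?thesis .
qed

lemma hit_translate:
  assumes m: "linear_form m"
  shows "hit (\<lambda>w. m (w * S h)) y = sweedler h (\<lambda>a b. hit m (y * S a) * b)"
proof -
  have "sweedler h (\<lambda>a b. hit m (y * S a) * b) =
      sweedler h (\<lambda>a b. sweedler (y * S a) (\<lambda>u v. s (m v) (u * b)))"
    unfolding hit_def
    by (rule sweedler_cong) (simp add: linear_op_sweedler[OF linear_op_mult_right] scale_mult_left)
  also have "\<dots> = sweedler h (\<lambda>a b. sweedler y
      (\<lambda>y1 y2. sweedler a (\<lambda>a1 a2. s (m (y2 * S a1)) (y1 * S a2 * b))))"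
  proof (rule sweedler_cong)
    fix a b
    have b1: "bilinear (\<lambda>u v. s (m v) (u * b))"
      unfolding bilinear_def linear_op_def by (simp add: linear_simps linear_formD[OF m])
    have b2: "bilinear (\<lambda>u v. s (m (y2 * v)) (y1 * u * b))" for y1 y2
      unfolding bilinear_def linear_op_def by (simp add: linear_simps linear_formD[OF m])
    show "sweedler (y * S a) (\<lambda>u v. s (m v) (u * b)) =
        sweedler y (\<lambda>y1 y2. sweedler a (\<lambda>a1 a2. s (m (y2 * S a1)) (y1 * S a2 * b)))"
      by (simp add: sweedler_mult[OF b1] sweedler_antipode[OF b2])
  qed
  also have "\<dots> = sweedler y (\<lambda>y1 y2. sweedler h
      (\<lambda>a b. sweedler a (\<lambda>a1 a2. s (m (y2 * S a1)) (y1 * S a2 * b))))"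
    by (rule sweedler_commute)
  also have "\<dots> = hit (\<lambda>w. m (w * S h)) y"
    unfolding hit_def by (simp add: sweedler_antipode_cancel[OF m])
  finally show ?thesis by simp
qed

definition integral :: "('h \<Rightarrow> 'k) \<Rightarrow> bool" where
  "integral l \<longleftrightarrow> linear_form l \<and> (\<forall>z. hit l z = s (l z) 1)"

text \<open>\<open>recover x n\<close> reconstructs \<open>l(x) h\<close> from the functional \<open>n = (w \<mapsto> l(w S(h)))\<close>
  alone, for any integral \<open>l\<close>; this is what makes the antipode injective.\<close>

definition recover :: "'h \<Rightarrow> ('h \<Rightarrow> 'k) \<Rightarrow> 'h" where
  "recover x n = (\<Sum>b\<in>hbasis. sweedler (hit n b) (\<lambda>p q. s (coord b (x * S (S p))) q))"

lemma recover_integral_translate: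
  assumes l: "integral l"
  shows "recover x (\<lambda>w. l (w * S h)) = s (l x) h"
proof -
  have lk: "linear_form l" using l unfolding integral_def by auto
  have hit_l: "hit (\<lambda>w. l (w * S h)) b = sweedler h (\<lambda>a c. s (l (b * S a)) c)" for b
    using hit_translate[OF lk, of h b] l unfolding integral_def by (simp add: scale_mult_left)
  have l_expansion: "(\<Sum>b\<in>hbasis. coord b w * l (b * S a)) = l (w * S a)" for w a
    by (rule linear_form_expansion[symmetric])
      (simp add: linear_form_def linear_simps linear_formD[OF lk])
  have "recover x (\<lambda>w. l (w * S h)) = (\<Sum>b\<in>hbasis. sweedler h
      (\<lambda>a c. s (l (b * S a)) (sweedler c (\<lambda>p q. s (coord b (x * S (S p))) q))))"
    unfolding recover_def hit_l by (simp add: sweedler_sweedler[symmetric] sweedler_scale)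
  also have "\<dots> = sweedler h (\<lambda>a c. sweedler c
      (\<lambda>p q. s (\<Sum>b\<in>hbasis. coord b (x * S (S p)) * l (b * S a)) q))"
    by (simp add: sweedler_sum_fun[symmetric] sweedler_scale_fun[symmetric] vs.scale_sum_left
        vs.scale_scale mult.commute)
  also have "\<dots> = sweedler h (\<lambda>a c. sweedler c (\<lambda>p q. s (l (x * S (S p) * S a)) q))"
    by (simp add: l_expansion)
  also have "\<dots> = sweedler h (\<lambda>u c. sweedler u (\<lambda>a p. s (l (x * S (S p) * S a)) c))"
  proof -
    have t: "trilinear (\<lambda>a p q. s (l (x * S (S p) * S a)) q)"
      unfolding trilinear_def linear_op_def by (simp add: linear_simps linear_formD[OF lk])
    show ?thesis by (rule sweedler_coassoc[OF t, symmetric])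
  qed
  also have "\<dots> = sweedler h (\<lambda>u c. s (\<epsilon> u) (s (l x) c))"
  proof (rule sweedler_cong)
    fix u c
    have "linear_op (\<lambda>z. s (l (x * S z)) c)"
      unfolding linear_op_def by (simp add: linear_simps linear_formD[OF lk])
    from sweedler_antipode_right[OF this, of u]
    show "sweedler u (\<lambda>a p. s (l (x * S (S p) * S a)) c) = s (\<epsilon> u) (s (l x) c)"
      by (simp add: antipode_mult antipode_one mult.assoc)
  qed
  also have "\<dots> = s (l x) h"
    by (rule sweedler_counit_left) (simp add: linear_op_def linear_simps)
  finally show ?thesis .
qed

lemma recover_zero: "recover x (\<lambda>w. 0) = 0"
  unfolding recover_def hit_def by (simp add: sweedler_zero_fun sweedler_zero)

lemma integral_antipode_kernel:
  assumes l: "integral l" and lx: "l x \<noteq> 0" and Sh: "S h = 0"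
  shows "h = 0"
proof -
  have lk: "linear_form l" using l unfolding integral_def by auto
  have "s (l x) h = recover x (\<lambda>w. l (w * S h))"
    by (rule recover_integral_translate[OF l, symmetric])
  also have "\<dots> = 0" by (simp add: Sh linear_form_zero[OF lk] recover_zero)
  finally show ?thesis using lx by simp
qed

text \<open>\<open>integralize m x\<close> is the trace of \<open>c \<mapsto> x S\<^sup>2(c\<^sub>1) m(c\<^sub>2)\<close>; such traces are integrals.\<close>

definition integralize :: "('h \<Rightarrow> 'k) \<Rightarrow> 'h \<Rightarrow> 'k" where
  "integralize m x = (\<Sum>c\<in>hbasis. coord c (x * S (S (hit m c))))"

lemma linear_form_integralize: "linear_form (integralize m)"
  unfolding linear_form_def integralize_def by (simp add: linear_simps sum.distrib sum_distrib_left)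

lemma sum_integralize_coord:
  "s (\<Sum>c\<in>hbasis. integralize (coord c) (x * S (hit m c))) 1 =
    (\<Sum>b\<in>hbasis. sweedler b (\<lambda>b1 b2. s (coord b (x * S (hit m b2) * S (S b1))) 1))"
proof -
  have "s (\<Sum>c\<in>hbasis. integralize (coord c) (x * S (hit m c))) 1 = (\<Sum>c\<in>hbasis. \<Sum>b\<in>hbasis.
      s (coord b (x * S (hit m c) * S (S (sweedler b (\<lambda>b1 b2. s (coord c b2) b1))))) 1)"
    unfolding integralize_def hit_def by (simp add: vs.scale_sum_left)
  also have "\<dots> = (\<Sum>c\<in>hbasis. \<Sum>b\<in>hbasis.
      sweedler b (\<lambda>b1 b2. s (coord c b2 * coord b (x * S (hit m c) * S (S b1))) 1))"
  proof (intro sum.cong refl)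
    fix c b
    have g: "linear_form (\<lambda>z. coord b (x * S (hit m c) * S (S z)))"
      unfolding linear_form_def by (simp add: linear_simps)
    show "s (coord b (x * S (hit m c) * S (S (sweedler b (\<lambda>b1 b2. s (coord c b2) b1))))) 1 =
        sweedler b (\<lambda>b1 b2. s (coord c b2 * coord b (x * S (hit m c) * S (S b1))) 1)"
      by (subst linear_form_sweedler[OF g]) (simp add: linear_simps)
  qed
  also have "\<dots> = (\<Sum>b\<in>hbasis. sweedler b
      (\<lambda>b1 b2. s (\<Sum>c\<in>hbasis. coord c b2 * coord b (x * S (hit m c) * S (S b1))) 1))"
    by (subst sum.swap) (simp add: sweedler_sum_fun[symmetric] vs.scale_sum_left)
  also have "\<dots> = (\<Sum>b\<in>hbasis. sweedler b (\<lambda>b1 b2. s (coord b (x * S (hit m b2) * S (S b1))) 1))"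
  proof -
    have "(\<Sum>c\<in>hbasis. coord c w * coord b (x * S (hit m c) * S (S b1))) =
        coord b (x * S (hit m w) * S (S b1))" for w b b1
      by (rule linear_form_expansion[symmetric])
        (simp add: linear_form_def linear_simps hit_add hit_scale)
    then show ?thesis by simp
  qed
  finally show ?thesis .
qed

text \<open>Every linear form is a combination of integrals, so a nonzero one exists.\<close>

lemma linear_form_integralize_sum:
  assumes m: "linear_form m"
  shows "m x = (\<Sum>c\<in>hbasis. integralize (coord c) (x * S (hit m c)))"
proof -
  have "s (\<Sum>c\<in>hbasis. integralize (coord c) (x * S (hit m c))) 1 =
    (\<Sum>b\<in>hbasis. sweedler b (\<lambda>b1 b2. sweedler b2 (\<lambda>e f. s (m f * coord b (x * S e * S (S b1))) 1)))"
    unfolding sum_integralize_coord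
  proof (intro sum.cong refl sweedler_cong)
    fix b b1 b2
    have g: "linear_form (\<lambda>z. coord b (x * S z * S (S b1)))"
      unfolding linear_form_def by (simp add: linear_simps)
    show "s (coord b (x * S (hit m b2) * S (S b1))) 1 =
        sweedler b2 (\<lambda>e f. s (m f * coord b (x * S e * S (S b1))) 1)"
      unfolding hit_def by (subst linear_form_sweedler[OF g]) (simp add: linear_simps mult.commute)
  qed
  also have "\<dots> = (\<Sum>b\<in>hbasis. sweedler b
      (\<lambda>g f. sweedler g (\<lambda>b1 e. s (m f * coord b (x * S e * S (S b1))) 1)))"
  proof (rule sum.cong[OF refl])
    fix b
    have t: "trilinear (\<lambda>b1 e f. s (m f * coord b (x * S e * S (S b1))) 1)"
      unfolding trilinear_def linear_op_def
      by (simp add: linear_simps linear_formD[OF m] algebra_simps)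
    show "sweedler b (\<lambda>b1 b2. sweedler b2 (\<lambda>e f. s (m f * coord b (x * S e * S (S b1))) 1)) =
        sweedler b (\<lambda>g f. sweedler g (\<lambda>b1 e. s (m f * coord b (x * S e * S (S b1))) 1))"
      by (rule sweedler_coassoc[OF t, symmetric])
  qed
  also have "\<dots> = (\<Sum>b\<in>hbasis. sweedler b (\<lambda>g f. s (\<epsilon> g) (s (m f * coord b x) 1)))"
  proof (intro sum.cong refl sweedler_cong)
    fix b g f
    have li: "linear_op (\<lambda>z. s (m f * coord b (x * S z)) 1)"
      unfolding linear_op_def by (simp add: linear_simps algebra_simps)
    show "sweedler g (\<lambda>b1 e. s (m f * coord b (x * S e * S (S b1))) 1) =
        s (\<epsilon> g) (s (m f * coord b x) 1)"
      using sweedler_antipode_left[OF li, of g] by (simp add: antipode_mult antipode_one mult.assoc)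
  qed
  also have "\<dots> = (\<Sum>b\<in>hbasis. s (m b * coord b x) 1)"
    by (intro sum.cong refl sweedler_counit_left)
      (simp add: linear_op_def linear_simps linear_formD[OF m] algebra_simps)
  also have "\<dots> = s (m x) 1"
    by (simp add: vs.scale_sum_left[symmetric] linear_form_expansion[OF m, of x] mult.commute)
  finally show ?thesis by simp
qed


lemma hit_integralize_expansion:
  "hit (integralize m) y = (\<Sum>d\<in>hbasis. sweedler d
      (\<lambda>d1 d2. d1 * sweedler (S (hit m d2)) (\<lambda>a b. s (coord d (y * S a)) b)))"
proof -
  define hc where "hc c = S (hit m c)" for c
  define Gd where "Gd d w = sweedler (S (hit m w)) (\<lambda>a b. s (coord d (y * S a)) b)" for d w
  have linG: "linear_op (Gd d)" for d
    unfolding linear_op_def Gd_def by (simp add: linear_simps hit_add hit_scale)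
  have "hit (integralize m) y = (\<Sum>c\<in>hbasis. hit (\<lambda>w. coord c (w * S (hc c))) y)"
    unfolding hit_def integralize_def hc_def by (simp add: vs.scale_sum_left sweedler_sum_fun)
  also have "\<dots> = (\<Sum>c\<in>hbasis. sweedler (hc c) (\<lambda>a b. hit (coord c) (y * S a) * b))"
    by (simp add: hit_translate[OF linear_form_coord])
  also have "\<dots> = (\<Sum>c\<in>hbasis. sweedler (hc c) (\<lambda>a b. \<Sum>d\<in>hbasis.
      sweedler d (\<lambda>d1 d2. s (coord c d2) (s (coord d (y * S a)) (d1 * b)))))"
  proof (intro sum.cong refl sweedler_cong)
    fix c a b
    have "hit (coord c) (y * S a) = (\<Sum>d\<in>hbasis. s (coord d (y * S a)) (hit (coord c) d))"
      by (rule linear_op_expansion[OF linear_op_hit])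
    then show "hit (coord c) (y * S a) * b =
        (\<Sum>d\<in>hbasis. sweedler d (\<lambda>d1 d2. s (coord c d2) (s (coord d (y * S a)) (d1 * b))))"
      unfolding hit_def
      by (simp add: sum_distrib_right scale_mult_left linear_op_sweedler[OF linear_op_mult_right]
          sweedler_scale_fun[symmetric] vs.scale_scale mult.commute)
  qed
  also have "\<dots> = (\<Sum>d\<in>hbasis. \<Sum>c\<in>hbasis. sweedler d (\<lambda>d1 d2. sweedler (hc c)
      (\<lambda>a b. s (coord c d2) (s (coord d (y * S a)) (d1 * b)))))"
    by (simp add: sweedler_sum_fun sweedler_commute[of "hc _"]) (rule sum.swap)
  also have "\<dots> = (\<Sum>d\<in>hbasis. sweedler d (\<lambda>d1 d2. d1 * (\<Sum>c\<in>hbasis. s (coord c d2) (Gd d c))))"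
    unfolding Gd_def hc_def
    by (simp add: sweedler_sum_fun[symmetric] sum_distrib_left scale_mult_right
        linear_op_sweedler[OF linear_op_mult_left] sweedler_scale_fun[symmetric] vs.scale_scale)
  also have "\<dots> = (\<Sum>d\<in>hbasis. sweedler d (\<lambda>d1 d2. d1 * Gd d d2))"
    by (simp add: linear_op_expansion[OF linG, symmetric])
  finally show ?thesis unfolding Gd_def .
qed

lemma sweedler3_antipode_contract:
  assumes m: "linear_form m"
  shows "sweedler d (\<lambda>d1 d2. sweedler d2 (\<lambda>e f. sweedler e
      (\<lambda>a b. s (m f) (s (coord c (y * S (S b))) (d1 * S a))))) =
    sweedler d (\<lambda>b f. s (m f) (s (coord c (y * S (S b))) 1))"
proof -
  define Z where "Z r v = sweedler r (\<lambda>b f. s (m f) (s (coord c (y * S (S b))) v))" for r v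
  have t1: "trilinear (\<lambda>a b f. s (m f) (s (coord c (y * S (S b))) (d1 * S a)))" for d1
    unfolding trilinear_def linear_op_def
    by (simp add: linear_simps linear_formD[OF m] algebra_simps)
  have t2: "trilinear (\<lambda>d1 a r. Z r (d1 * S a))"
    unfolding trilinear_def Z_def
    by (intro conjI allI linear_op_sweedler_fun linear_op_sweedler_arg)
      (simp_all add: linear_op_def linear_simps mult_ac)
  have "sweedler d (\<lambda>d1 d2. sweedler d2 (\<lambda>e f. sweedler e
      (\<lambda>a b. s (m f) (s (coord c (y * S (S b))) (d1 * S a))))) =
      sweedler d (\<lambda>d1 d2. sweedler d2 (\<lambda>a r. Z r (d1 * S a)))"
    unfolding Z_def by (rule sweedler_cong, rule sweedler_coassoc[OF t1])
  also have "\<dots> = sweedler d (\<lambda>u r. sweedler u (\<lambda>d1 a. Z r (d1 * S a)))"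
    by (rule sweedler_coassoc[OF t2, symmetric])
  also have "\<dots> = sweedler d (\<lambda>u r. s (\<epsilon> u) (Z r 1))"
  proof (rule sweedler_cong)
    fix u r
    have "linear_op (Z r)"
      unfolding Z_def by (rule linear_op_sweedler_fun) (simp add: linear_op_def linear_simps mult_ac)
    then show "sweedler u (\<lambda>d1 a. Z r (d1 * S a)) = s (\<epsilon> u) (Z r 1)"
      by (rule sweedler_antipode_right)
  qed
  also have "\<dots> = Z d 1"
    by (rule sweedler_counit_left) (simp add: linear_op_def Z_def linear_simps)
  finally show ?thesis unfolding Z_def .
qed

lemma hit_integralize:
  assumes m: "linear_form m"
  shows "hit (integralize m) y = s (integralize m y) 1"
proof -
  have Gd: "d1 * sweedler (S (hit m d2)) (\<lambda>a b. s (coord d (y * S a)) b) =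
      sweedler d2 (\<lambda>e f. sweedler e (\<lambda>a b. s (m f) (s (coord d (y * S (S b))) (d1 * S a))))"
    for d d1 d2
  proof -
    have bC: "bilinear (\<lambda>a b. s (coord d (y * S a)) b)"
      unfolding bilinear_def linear_op_def by (simp add: linear_simps)
    have "sweedler (S (hit m d2)) (\<lambda>a b. s (coord d (y * S a)) b) =
        sweedler d2 (\<lambda>e f. s (m f) (sweedler e (\<lambda>a b. s (coord d (y * S (S b))) (S a))))"
      unfolding hit_def
      by (simp add: sweedler_antipode[OF bC] sweedler_sweedler[symmetric] sweedler_scale)
    then show ?thesis
      by (simp add: linear_op_sweedler[OF linear_op_mult_left] scale_mult_right
          sweedler_scale_fun[symmetric] vs.scale_scale)
  qed
  have int: "s (coord d (y * S (S (hit m d)))) 1 =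
      sweedler d (\<lambda>b f. s (m f) (s (coord d (y * S (S b))) 1))" for d
  proof -
    have g: "linear_form (\<lambda>z. coord d (y * S (S z)))"
      unfolding linear_form_def by (simp add: linear_simps)
    show ?thesis unfolding hit_def by (subst linear_form_sweedler[OF g]) (simp add: linear_simps)
  qed
  show ?thesis
    unfolding hit_integralize_expansion Gd sweedler3_antipode_contract[OF m]
      integralize_def vs.scale_sum_left int ..
qed

lemma ex_nonzero_integral: "\<exists>l. integral l \<and> (\<exists>x. l x \<noteq> 0)"
proof -
  have "(\<Sum>c\<in>hbasis. integralize (coord c) (1 * S (hit \<epsilon> c))) \<noteq> 0"
    using linear_form_integralize_sum[OF linear_form_counit, of 1] by (simp add: counit_one)
  then obtain c where "integralize (coord c) (1 * S (hit \<epsilon> c)) \<noteq> 0"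
    by (meson sum.neutral)
  moreover have "integral (integralize (coord c))"
    unfolding integral_def using linear_form_integralize hit_integralize[OF linear_form_coord] by auto
  ultimately show ?thesis by blast
qed

lemma inj_antipode: "inj S"
proof (rule injI)
  fix x y assume "S x = S y"
  moreover have "S x = S (x - y) + S y" by (metis antipode_add diff_add_cancel)
  ultimately have "S (x - y) = 0" by simp
  then have "x - y = 0"
    using ex_nonzero_integral integral_antipode_kernel by blast
  then show "x = y" by simp
qed

subsection \<open>Normal Hopf subalgebras and Hopf ideals\<close>

lemma setprod_span: "setprod s A B = vs.span {a * b |a b. a \<in> A \<and> b \<in> B}"
  unfolding setprod_def by simp

lemma subspace_setprod: "vs.subspace (setprod s A B)"
  unfolding setprod_span by simp

lemma setprod_least:
  assumes "vs.subspace C" and "\<And>a b. a \<in> A \<Longrightarrow> b \<in> B \<Longrightarrow> a * b \<in> C"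
  shows "setprod s A B \<subseteq> C"
  unfolding setprod_span using assms by (intro vs.span_minimal) auto

lemma mult_mem_setprod: "a \<in> A \<Longrightarrow> b \<in> B \<Longrightarrow> a * b \<in> setprod s A B"
  unfolding setprod_span by (intro vs.span_base) blast

lemma setprod_mult_left:
  assumes "x \<in> setprod s UNIV P"
  shows "h * x \<in> setprod s UNIV P"
proof -
  have "setprod s UNIV P \<subseteq> {x. h * x \<in> setprod s UNIV P}"
  proof (rule setprod_least)
    show "vs.subspace {x. h * x \<in> setprod s UNIV P}"
      using subspace_setprod unfolding vs.subspace_def
      by (auto simp: distrib_left scale_mult_right)
  qed (simp add: mult.assoc[symmetric] mult_mem_setprod)
  then show ?thesis using assms by blast
qed

lemma setprod_mult_right:
  assumes "x \<in> setprod s P UNIV"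
  shows "x * h \<in> setprod s P UNIV"
proof -
  have "setprod s P UNIV \<subseteq> {x. x * h \<in> setprod s P UNIV}"
  proof (rule setprod_least)
    show "vs.subspace {x. x * h \<in> setprod s P UNIV}"
      using subspace_setprod unfolding vs.subspace_def
      by (auto simp: distrib_right scale_mult_left)
  qed (simp add: mult.assoc mult_mem_setprod)
  then show ?thesis using assms by blast
qed

lemma antipode_plus_part:
  "hopf_subalgebra s \<Delta> S K \<Longrightarrow> k \<in> plus_part \<epsilon> K \<Longrightarrow> S k \<in> plus_part \<epsilon> K"
  unfolding plus_part_def hopf_subalgebra_def by (auto simp: counit_antipode)

lemma antipode_setprod:
  assumes K: "hopf_subalgebra s \<Delta> S K"
  shows "S ` setprod s UNIV (plus_part \<epsilon> K) \<subseteq> setprod s (plus_part \<epsilon> K) UNIV"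
proof -
  have "setprod s UNIV (plus_part \<epsilon> K) \<subseteq> {x. S x \<in> setprod s (plus_part \<epsilon> K) UNIV}"
  proof (rule setprod_least)
    show "vs.subspace {x. S x \<in> setprod s (plus_part \<epsilon> K) UNIV}"
      using subspace_setprod unfolding vs.subspace_def
      by (auto simp: antipode_add antipode_scale antipode_zero)
  qed (simp add: antipode_mult mult_mem_setprod antipode_plus_part[OF K])
  then show ?thesis by blast
qed

lemma counit_setprod: "x \<in> setprod s UNIV (plus_part \<epsilon> K) \<Longrightarrow> \<epsilon> x = 0"
  using setprod_least[of "{x. \<epsilon> x = 0}" UNIV "plus_part \<epsilon> K"]
  unfolding vs.subspace_def
  by (auto simp: counit_add counit_scale counit_mult plus_part_def
      linear_form_zero[OF linear_form_counit])

lemma teq_comult_zero: "teq s (\<Delta> 0) []"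
  unfolding teq_def
proof (intro allI impI)
  fix f g :: "'h \<Rightarrow> 'k" assume fg: "lfun s f \<and> lfun s g"
  have "tpair f g (\<Delta> (s 0 0)) = tpair f g (map (\<lambda>(a, b). (s 0 a, b)) (\<Delta> 0))"
    using comult_scale fg unfolding teq_def by blast
  also have "\<dots> = 0" using tpair_scale[where c=0 and f=f] fg lfun_iff_linear_form by simp
  finally show "tpair f g (\<Delta> 0) = tpair f g []" by (simp add: tpair_def)
qed

lemma teq_comult_add: "teq s (\<Delta> x) ys1 \<Longrightarrow> teq s (\<Delta> y) ys2 \<Longrightarrow> teq s (\<Delta> (x + y)) (ys1 @ ys2)"
  using comult_add[of x y] unfolding teq_def by (simp add: tpair_append)

lemma teq_comult_scale: "teq s (\<Delta> x) ys \<Longrightarrow> teq s (\<Delta> (s c x)) (map (\<lambda>(a, b). (s c a, b)) ys)"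
  using comult_scale[of c x] unfolding teq_def by (simp add: tpair_scale lfun_iff_linear_form)



lemma teq_comult_mult_counit_split:
  assumes ks: "teq s (\<Delta> k) ks"
  shows "teq s (\<Delta> (h * k))
    (concat (map (\<lambda>(a, b). map (\<lambda>(p, q). (a * (p - s (\<epsilon> p) 1), b * q)) ks) (\<Delta> h))
      @ map (\<lambda>(a, b). (a, b * k)) (\<Delta> h))"
  unfolding teq_def
proof (intro allI impI)
  fix f g :: "'h \<Rightarrow> 'k" assume fg: "lfun s f \<and> lfun s g"
  then have f: "linear_form f" and g: "linear_form g" using lfun_iff_linear_form by auto
  have lm: "lfun s (\<lambda>p. f (a * p))" "lfun s (\<lambda>q. g (b * q))" for a b
    unfolding lfun_iff_linear_form linear_form_def using f g
    by (auto simp: linear_formD distrib_left scale_mult_right)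
  have comult_k: "(\<Sum>(p, q)\<leftarrow>\<Delta> k. f (a * p) * g (b * q)) = (\<Sum>(p, q)\<leftarrow>ks. f (a * p) * g (b * q))"
    for a b
    using ks lm(1)[of a] lm(2)[of b] unfolding teq_def tpair_def by auto
  have counit_k: "(\<Sum>(p, q)\<leftarrow>ks. \<epsilon> p * (f a * g (b * q))) = f a * g (b * k)" for a b
  proof -
    have gb: "linear_form (\<lambda>q. g (b * q))" using lm(2)[of b] lfun_iff_linear_form by auto
    have "(\<Sum>(p, q)\<leftarrow>ks. \<epsilon> p * g (b * q)) = (\<Sum>(p, q)\<leftarrow>\<Delta> k. \<epsilon> p * g (b * q))"
      using ks lm(2)[of b] lfun_counit unfolding teq_def tpair_def by auto
    also have "\<dots> = g (b * k)"
      using linear_form_counit_sum[OF gb, of "\<Delta> k"] by (simp add: counit_left)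
    finally have "(\<Sum>(p, q)\<leftarrow>ks. f a * (\<epsilon> p * g (b * q))) = f a * g (b * k)"
      by (simp only: sum_list_pair_const_mult)
    then show ?thesis by (simp add: mult.left_commute)
  qed
  have f_diff: "f (a * (p - s (\<epsilon> p) 1)) = f (a * p) - \<epsilon> p * f a" for a p
  proof -
    have "a * (p - s (\<epsilon> p) 1) = a * p - s (\<epsilon> p) a"
      by (simp add: right_diff_distrib scale_mult_right)
    then show ?thesis by (simp add: linear_form_diff[OF f] linear_formD[OF f])
  qed
  let ?ys = "concat (map (\<lambda>(a, b). map (\<lambda>(p, q). (a * (p - s (\<epsilon> p) 1), b * q)) ks) (\<Delta> h))
      @ map (\<lambda>(a, b). (a, b * k)) (\<Delta> h)"
  have "tpair f g ?ys = (\<Sum>(a, b)\<leftarrow>\<Delta> h. \<Sum>(p, q)\<leftarrow>ks. f (a * (p - s (\<epsilon> p) 1)) * g (b * q))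
      + (\<Sum>(a, b)\<leftarrow>\<Delta> h. f a * g (b * k))"
    unfolding tpair_append tpair_concat tpair_map by (rule refl)
  also have "\<dots> = (\<Sum>(a, b)\<leftarrow>\<Delta> h. (\<Sum>(p, q)\<leftarrow>\<Delta> k. f (a * p) * g (b * q)) - f a * g (b * k))
      + (\<Sum>(a, b)\<leftarrow>\<Delta> h. f a * g (b * k))"
    by (simp add: f_diff left_diff_distrib sum_list_pair_diff comult_k mult.assoc counit_k)
  also have "\<dots> = (\<Sum>(a, b)\<leftarrow>\<Delta> h. \<Sum>(p, q)\<leftarrow>\<Delta> k. f (a * p) * g (b * q))"
    by (simp add: sum_list_pair_add[symmetric])
  also have "\<dots> = tpair f g (concat (map (\<lambda>(a, b). map (\<lambda>(a', b'). (a * a', b * b')) (\<Delta> k)) (\<Delta> h)))"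
    unfolding tpair_concat tpair_map by (rule refl)
  also have "\<dots> = tpair f g (\<Delta> (h * k))"
    using comult_mult fg unfolding teq_def by metis
  finally show "tpair f g (\<Delta> (h * k)) = tpair f g ?ys" by simp
qed

lemma comult_mult_plus_part:
  assumes K: "hopf_subalgebra s \<Delta> S K" and k: "k \<in> plus_part \<epsilon> K"
  shows "\<exists>ys. (\<forall>(a, b)\<in>set ys. a \<in> setprod s UNIV (plus_part \<epsilon> K) \<or>
      b \<in> setprod s UNIV (plus_part \<epsilon> K)) \<and> teq s (\<Delta> (h * k)) ys"
proof -
  let ?J = "setprod s UNIV (plus_part \<epsilon> K)"
  have subK: "vs.subspace K" and oneK: "1 \<in> K" using K unfolding hopf_subalgebra_def by auto
  obtain ks where ks: "set ks \<subseteq> K \<times> K" "teq s (\<Delta> k) ks"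
    using K k unfolding hopf_subalgebra_def plus_part_def by blast
  have "a * (p - s (\<epsilon> p) 1) \<in> ?J" if "p \<in> K" for a p
  proof -
    have "p - s (\<epsilon> p) 1 \<in> K" using that subK oneK by (simp add: vs.subspace_diff vs.subspace_scale)
    moreover have "\<epsilon> (p - s (\<epsilon> p) 1) = 0"
      using counit_add[of p "- s (\<epsilon> p) 1"] counit_scale[of "- \<epsilon> p" 1] by (simp add: counit_one)
    ultimately show ?thesis unfolding setprod_span plus_part_def by (auto intro!: vs.span_base)
  qed
  moreover have "b * k \<in> ?J" for b unfolding setprod_span using k by (auto intro!: vs.span_base)
  ultimately show ?thesis
    using ks(1) teq_comult_mult_counit_split[OF ks(2), of h] by (intro exI conjI) auto
qed

lemma subspace_coideal_witnesses:
  assumes J: "vs.subspace J"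
  shows "vs.subspace {x. \<exists>ys. (\<forall>(a, b)\<in>set ys. a \<in> J \<or> b \<in> J) \<and> teq s (\<Delta> x) ys}"
    (is "vs.subspace ?C")
proof (rule vs.subspaceI)
  show "0 \<in> ?C" using teq_comult_zero by (intro CollectI exI[of _ "[]"]) auto
next
  fix x y assume "x \<in> ?C" "y \<in> ?C"
  then obtain ys1 ys2 where "\<forall>(a, b)\<in>set ys1. a \<in> J \<or> b \<in> J" "teq s (\<Delta> x) ys1"
    "\<forall>(a, b)\<in>set ys2. a \<in> J \<or> b \<in> J" "teq s (\<Delta> y) ys2" by blast
  then show "x + y \<in> ?C" using teq_comult_add by (intro CollectI exI[of _ "ys1 @ ys2"]) auto
next
  fix c x assume "x \<in> ?C"
  then obtain ys where ys: "\<forall>(a, b)\<in>set ys. a \<in> J \<or> b \<in> J" "teq s (\<Delta> x) ys" by blast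
  have "\<forall>(a, b)\<in>set (map (\<lambda>(a, b). (s c a, b)) ys). a \<in> J \<or> b \<in> J"
    using ys(1) vs.subspace_scale[OF J] by auto
  then show "s c x \<in> ?C" using teq_comult_scale[OF ys(2)] by blast
qed

lemma normal_setprod_hopf_ideal:
  assumes "normal_hopf_subalgebra s \<Delta> \<epsilon> S K"
  shows "hopf_ideal s \<Delta> \<epsilon> S (setprod s UNIV (plus_part \<epsilon> K))"
proof -
  let ?J = "setprod s UNIV (plus_part \<epsilon> K)"
  have K: "hopf_subalgebra s \<Delta> S K" and N: "?J = setprod s (plus_part \<epsilon> K) UNIV"
    using assms unfolding normal_hopf_subalgebra_def by auto
  have "?J \<subseteq> {x. \<exists>ys. (\<forall>(a, b)\<in>set ys. a \<in> ?J \<or> b \<in> ?J) \<and> teq s (\<Delta> x) ys}"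
    using comult_mult_plus_part[OF K]
    by (intro setprod_least subspace_coideal_witnesses subspace_setprod) blast
  moreover have "\<forall>h x. x \<in> ?J \<longrightarrow> h * x \<in> ?J \<and> x * h \<in> ?J"
    using setprod_mult_left setprod_mult_right N by metis
  moreover have "S ` ?J \<subseteq> ?J" using antipode_setprod[OF K] N by auto
  ultimately show ?thesis
    unfolding hopf_ideal_def using subspace_setprod counit_setprod by blast
qed

lemma normal_if_setprod_hopf_ideal:
  assumes K: "hopf_subalgebra s \<Delta> S K"
    and ideal: "hopf_ideal s \<Delta> \<epsilon> S (setprod s UNIV (plus_part \<epsilon> K))"
  shows "normal_hopf_subalgebra s \<Delta> \<epsilon> S K"
proof -
  let ?I = "setprod s UNIV (plus_part \<epsilon> K)"
  let ?J = "setprod s (plus_part \<epsilon> K) UNIV"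
  interpret fd: finite_dimensional_vector_space s hbasis
    by unfold_locales (use hbasis_basis in auto)
  interpret fp: finite_dimensional_vector_space_pair_1 s hbasis s
    by unfold_locales
  have JI: "?J \<subseteq> ?I"
  proof (rule setprod_least[OF subspace_setprod])
    fix a b assume "a \<in> plus_part \<epsilon> K"
    then have "1 * a \<in> ?I" by (rule mult_mem_setprod[OF UNIV_I])
    then show "a * b \<in> ?I" using ideal unfolding hopf_ideal_def by simp
  qed
  have "vs.dim ?I = vs.dim (S ` ?I)"
    using fp.dim_image_eq[OF linear_antipode] inj_antipode by (simp add: inj_on_def inj_def)
  also have "\<dots> \<le> vs.dim ?J"
    using antipode_setprod[OF K] by (rule fd.dim_subset)
  finally have "?J = ?I"
    using fd.subspace_dim_equal[OF subspace_setprod subspace_setprod JI] by simp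
  then show ?thesis using K unfolding normal_hopf_subalgebra_def by simp
qed

lemma setprod_plus_part_mono:
  "K \<subseteq> R \<Longrightarrow> setprod s (plus_part \<epsilon> K) UNIV \<subseteq> setprod s (plus_part \<epsilon> R) UNIV"
  unfolding setprod_span plus_part_def by (intro vs.span_mono) blast

end

theorem mainTheorem11:
  fixes scale :: "'k::field \<Rightarrow> 'h::ring_1 \<Rightarrow> 'h"
    and \<Delta> :: "'h \<Rightarrow> ('h \<times> 'h) list" and \<epsilon> :: "'h \<Rightarrow> 'k" and S :: "'h \<Rightarrow> 'h"
    and R I :: "'h set"
  assumes H: "hopf_algebra scale \<Delta> \<epsilon> S"
    and R: "hopf_subalgebra scale \<Delta> S R"
    and I: "hopf_ideal scale \<Delta> \<epsilon> S I"
    and I_sub: "I \<subseteq> setprod scale (plus_part \<epsilon> R) UNIV"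
    and I_max: "\<And>J. hopf_ideal scale \<Delta> \<epsilon> S J \<Longrightarrow> J \<subseteq> setprod scale (plus_part \<epsilon> R) UNIV
                  \<Longrightarrow> J \<subseteq> I"
  shows "(\<forall>K. normal_hopf_subalgebra scale \<Delta> \<epsilon> S K \<and> K \<subseteq> R \<and>
              (\<forall>K'. normal_hopf_subalgebra scale \<Delta> \<epsilon> S K' \<and> K' \<subseteq> R \<longrightarrow> K' \<subseteq> K)
           \<longrightarrow> setprod scale UNIV (plus_part \<epsilon> K) \<subseteq> I)
       \<and> (\<forall>K. hopf_subalgebra scale \<Delta> S K \<and> K \<subseteq> R \<and> I = setprod scale UNIV (plus_part \<epsilon> K)
           \<longrightarrow> normal_hopf_subalgebra scale \<Delta> \<epsilon> S K)"
proof -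
  interpret finite_hopf scale \<Delta> \<epsilon> S by (rule finite_hopf.intro) (rule H)
  show ?thesis
  proof (intro conjI allI impI)
    fix K assume K: "normal_hopf_subalgebra scale \<Delta> \<epsilon> S K \<and> K \<subseteq> R \<and>
        (\<forall>K'. normal_hopf_subalgebra scale \<Delta> \<epsilon> S K' \<and> K' \<subseteq> R \<longrightarrow> K' \<subseteq> K)"
    then have "setprod scale UNIV (plus_part \<epsilon> K) \<subseteq> setprod scale (plus_part \<epsilon> R) UNIV"
      using setprod_plus_part_mono[of K R] unfolding normal_hopf_subalgebra_def by auto
    with K show "setprod scale UNIV (plus_part \<epsilon> K) \<subseteq> I"
      using I_max normal_setprod_hopf_ideal by blast
  next
    fix K assume "hopf_subalgebra scale \<Delta> S K \<and> K \<subseteq> R \<and> I = setprod scale UNIV (plus_part \<epsilon> K)"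
    then show "normal_hopf_subalgebra scale \<Delta> \<epsilon> S K"
      using I normal_if_setprod_hopf_ideal by auto
  qed
qed

end
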